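(* There exists $n_0$ such that the following holds for every integer $n \geq n_0$. Let $F$ be any graph on $n$ vertices with no isolated vertices, with minimum degree $\delta(F)=\delta$ and maximum degree $\Delta(F) \leq \sqrt{n}/40$. If $G$ is an $n$-vertex graph containing no subgraph isomorphic to $F$, then $\lambda(G) \leq \lambda(H_{n,\delta})$, with equality if and only if $G \cong H_{n,\delta}$.
   Context: All graphs are finite and simple. $\lambda(G)$ denotes the spectral radius (largest eigenvalue) of the adjacency matrix of $G$. For integers $n>k\geq 1$, $H_{n,k} = K_{k-1} \vee (K_{n-k} \cup K_1)$, i.e. the $n$-vertex graph consisting of a clique on $n-1$ vertices together with one additional vertex adjacent to exactly $k-1$ vertices of the clique; here $\vee$ denotes the join (all edges between the two graphs added) and $\cup$ the disjoint union. *)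

theory Defs
  imports Complex_Main "Jordan_Normal_Form.Char_Poly"
begin

definition sgraph :: "nat \<Rightarrow> (nat \<Rightarrow> nat \<Rightarrow> bool) \<Rightarrow> bool" where
  "sgraph n E \<longleftrightarrow> (\<forall>i j. E i j \<longrightarrow> i < n \<and> j < n) \<and> (\<forall>i j. E i j \<longrightarrow> E j i)
                 \<and> (\<forall>i. \<not> E i i)"

definition degree :: "nat \<Rightarrow> (nat \<Rightarrow> nat \<Rightarrow> bool) \<Rightarrow> nat \<Rightarrow> nat" where
  "degree n E i = card {j. j < n \<and> E i j}"

definition min_degree :: "nat \<Rightarrow> (nat \<Rightarrow> nat \<Rightarrow> bool) \<Rightarrow> nat" where
  "min_degree n E = Min (degree n E ` {..<n})"

definition max_degree :: "nat \<Rightarrow> (nat \<Rightarrow> nat \<Rightarrow> bool) \<Rightarrow> nat" where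
  "max_degree n E = Max (degree n E ` {..<n})"

definition adj_matrix :: "nat \<Rightarrow> (nat \<Rightarrow> nat \<Rightarrow> bool) \<Rightarrow> real mat" where
  "adj_matrix n E = mat n n (\<lambda>(i, j). if E i j then 1 else 0)"

definition spec_rad :: "nat \<Rightarrow> (nat \<Rightarrow> nat \<Rightarrow> bool) \<Rightarrow> real" where
  "spec_rad n E = Max {x. eigenvalue (adj_matrix n E) x}"

definition contains_subgraph ::
  "nat \<Rightarrow> (nat \<Rightarrow> nat \<Rightarrow> bool) \<Rightarrow> nat \<Rightarrow> (nat \<Rightarrow> nat \<Rightarrow> bool) \<Rightarrow> bool" where
  "contains_subgraph n G m F \<longleftrightarrow>
     (\<exists>f. inj_on f {..<m} \<and> f ` {..<m} \<subseteq> {..<n} \<and>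
          (\<forall>i<m. \<forall>j<m. F i j \<longrightarrow> G (f i) (f j)))"

definition graph_iso :: "nat \<Rightarrow> (nat \<Rightarrow> nat \<Rightarrow> bool) \<Rightarrow> (nat \<Rightarrow> nat \<Rightarrow> bool) \<Rightarrow> bool" where
  "graph_iso n G H \<longleftrightarrow>
     (\<exists>f. bij_betw f {..<n} {..<n} \<and> (\<forall>i<n. \<forall>j<n. G i j \<longleftrightarrow> H (f i) (f j)))"

text \<open>H_{n,k} = K_{k-1} join (K_{n-k} disjoint-union K_1): vertices 0..k-2 form K_{k-1},
vertices k-1..n-2 form K_{n-k}, vertex n-1 is the K_1.\<close>

definition H_graph :: "nat \<Rightarrow> nat \<Rightarrow> nat \<Rightarrow> nat \<Rightarrow> bool" where
  "H_graph n k i j \<longleftrightarrow> i < n \<and> j < n \<and> i \<noteq> j \<and>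
     ((i < n - 1 \<and> j < n - 1) \<or> (i = n - 1 \<and> j < k - 1) \<or> (j = n - 1 \<and> i < k - 1))"

end

(* Write \<delta> = \<delta>(F).  The graph H_{n,\<delta>} has an explicit positive Perron vector, constant on
   its three parts, and this test vector bounds the quadratic form of every relabelling of
   H_{n,\<delta>} by \<lambda>(H_{n,\<delta>}) \<ge> n - 2.  If G has a vertex of degree below \<delta>, then G lies in such
   a relabelling, which gives \<lambda>(G) \<le> \<lambda>(H_{n,\<delta>}), with equality only if G is the relabelling.
   Otherwise, if \<lambda>(G) \<ge> \<lambda>(H_{n,\<delta>}), a nonnegative eigenvector shows that G is nearly
   complete: the degrees of its complement sum to at most 3n, and a vertex v of degree d with
   5d \<le> n - 2 leaves at most 2(d - \<delta>) non-adjacent ordered pairs in G - v.  For the latter,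
   delete the edges from v to all but \<delta> - 1 of its neighbours and add the non-adjacent pairs:
   the result lies in a copy of H_{n,\<delta>}, so at the eigenvector its quadratic form is at most
   that of G, and comparing the entries of the eigenvector bounds the number of pairs.
   F is then packed into G: a vertex of degree \<delta> of F goes to a vertex of low degree and its
   neighbours to a clique there, the few vertices of large complement degree receive
   isolated preimages greedily, and the remaining conflicts are removed by swaps.  So G
   contains F, contradicting the hypothesis. *)

theory Submission
  imports Defs "Jordan_Normal_Form.Spectral_Radius"
begin

section \<open>Adjacency matrices and real eigenvalues\<close>

definition adjacency_mat :: "nat \<Rightarrow> (nat \<Rightarrow> nat \<Rightarrow> bool) \<Rightarrow> 'a::field mat" where
  "adjacency_mat n E = mat n n (\<lambda>(i, j). if E i j then 1 else 0)"

definition nbr_sum :: "nat \<Rightarrow> (nat \<Rightarrow> nat \<Rightarrow> bool) \<Rightarrow> (nat \<Rightarrow> 'a::comm_monoid_add) \<Rightarrow> nat \<Rightarrow> 'a"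
  where "nbr_sum n E v i = (\<Sum>j<n. if E i j then v j else 0)"

lemma adj_matrix_eq_adjacency_mat: "adj_matrix n E = adjacency_mat n E"
  unfolding adj_matrix_def adjacency_mat_def by simp

lemma adjacency_mat_carrier: "adjacency_mat n E \<in> carrier_mat n n"
  unfolding adjacency_mat_def by simp

lemma dim_row_adjacency_mat [simp]: "dim_row (adjacency_mat n E) = n"
  unfolding adjacency_mat_def by simp

lemma adjacency_mat_mult_vec:
  "i < n \<Longrightarrow> (adjacency_mat n E *\<^sub>v vec n f) $ i = nbr_sum n E f i"
  unfolding adjacency_mat_def nbr_sum_def
  by (auto simp: scalar_prod_def lessThan_atLeast0 intro!: sum.cong)

lemma eigenvector_adjacency_mat_vec_iff:
  "eigenvector (adjacency_mat n E) (vec n f) l \<longleftrightarrow>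
     (\<exists>i<n. f i \<noteq> 0) \<and> (\<forall>i<n. nbr_sum n E f i = l * f i)"
proof -
  have "vec n f \<noteq> 0\<^sub>v n \<longleftrightarrow> (\<exists>i<n. f i \<noteq> 0)"
    by (auto simp: vec_eq_iff)
  moreover have "adjacency_mat n E *\<^sub>v vec n f = l \<cdot>\<^sub>v vec n f \<longleftrightarrow> (\<forall>i<n. nbr_sum n E f i = l * f i)"
    by (auto simp: vec_eq_iff adjacency_mat_mult_vec simp del: index_mult_mat_vec)
  ultimately show ?thesis
    unfolding eigenvector_def by simp
qed

lemma eigenvalue_adjacency_mat_iff:
  "eigenvalue (adjacency_mat n E) l \<longleftrightarrow> (\<exists>f. (\<exists>i<n. f i \<noteq> 0) \<and> (\<forall>i<n. nbr_sum n E f i = l * f i))"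
proof
  assume "eigenvalue (adjacency_mat n E) l"
  then obtain v where v: "eigenvector (adjacency_mat n E) v l"
    unfolding eigenvalue_def by blast
  then have "v = vec n (\<lambda>i. v $ i)"
    unfolding eigenvector_def by auto
  with v show "\<exists>f. (\<exists>i<n. f i \<noteq> 0) \<and> (\<forall>i<n. nbr_sum n E f i = l * f i)"
    using eigenvector_adjacency_mat_vec_iff[of n E "\<lambda>i. v $ i" l] by auto
qed (auto simp: eigenvalue_def eigenvector_adjacency_mat_vec_iff[symmetric])

lemma finite_eigenvalues_adj_matrix: "finite {x. eigenvalue (adj_matrix n E) x}"
  using card_finite_spectrum(1)[OF adjacency_mat_carrier[of n E]]
  unfolding spectrum_def adj_matrix_eq_adjacency_mat by simp

lemma eigenvalue_adjacency_mat_complex_real: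
  assumes sym: "\<And>i j. E i j \<Longrightarrow> E j i" and ev: "eigenvalue (adjacency_mat n E) c"
  shows "Im c = 0"
proof -
  obtain w where w: "\<exists>i<n. w i \<noteq> 0" "\<forall>i<n. nbr_sum n E w i = c * w i"
    using ev unfolding eigenvalue_adjacency_mat_iff by blast
  define N where "N = (\<Sum>i<n. (cmod (w i))\<^sup>2)"
  define L where "L = (\<Sum>i<n. \<Sum>j<n. if E i j then cnj (w i) * w j else 0)"
  have "N > 0"
  proof -
    obtain i where "i < n" "w i \<noteq> 0" using w(1) by blast
    then have "0 < (cmod (w i))\<^sup>2" "(cmod (w i))\<^sup>2 \<le> N"
      unfolding N_def by (auto intro!: member_le_sum)
    then show ?thesis by linarith
  qed
  have "cnj L = (\<Sum>i<n. \<Sum>j<n. if E i j then w i * cnj (w j) else 0)"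
    unfolding L_def by (simp add: if_distrib cong: if_cong)
  also have "\<dots> = (\<Sum>j<n. \<Sum>i<n. if E i j then w i * cnj (w j) else 0)"
    by (rule sum.swap)
  also have "\<dots> = L"
    unfolding L_def using sym by (intro sum.cong refl) (auto simp: mult.commute)
  finally have "Im L = 0"
    by (metis cnj.sel(2) neg_equal_zero)
  have "L = (\<Sum>i<n. cnj (w i) * nbr_sum n E w i)"
    unfolding L_def nbr_sum_def by (simp add: sum_distrib_left if_distrib cong: if_cong)
  also have "\<dots> = (\<Sum>i<n. c * complex_of_real ((cmod (w i))\<^sup>2))"
  proof (intro sum.cong refl)
    fix i assume "i \<in> {..<n}"
    then have "nbr_sum n E w i = c * w i"
      using w(2) by simp
    then have "cnj (w i) * nbr_sum n E w i = c * (w i * cnj (w i))"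
      by (simp add: ac_simps)
    also have "w i * cnj (w i) = complex_of_real ((cmod (w i))\<^sup>2)"
      using complex_norm_square[of "w i"] by simp
    finally show "cnj (w i) * nbr_sum n E w i = c * complex_of_real ((cmod (w i))\<^sup>2)" .
  qed
  also have "\<dots> = c * complex_of_real N"
    unfolding N_def by (simp add: sum_distrib_left)
  finally have "Im c * N = 0"
    using \<open>Im L = 0\<close> by simp
  then show ?thesis
    using \<open>N > 0\<close> by simp
qed

lemma symmetric_adj_matrix_has_eigenvalue:
  assumes "n > 0" and sym: "\<And>i j. E i j \<Longrightarrow> E j i"
  shows "\<exists>l. eigenvalue (adj_matrix n E) l"
proof -
  obtain c where c: "eigenvalue (adjacency_mat n E :: complex mat) c"
    using spectrum_non_empty[OF adjacency_mat_carrier \<open>n > 0\<close>] unfolding spectrum_def by auto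
  then obtain w where w: "\<exists>i<n. w i \<noteq> 0" "\<forall>i<n. nbr_sum n E w i = c * w i"
    unfolding eigenvalue_adjacency_mat_iff by blast
  have "Im c = 0"
    by (rule eigenvalue_adjacency_mat_complex_real[OF sym c])
  have "nbr_sum n E (\<lambda>j. Re (w j)) i = Re c * Re (w i) \<and>
        nbr_sum n E (\<lambda>j. Im (w j)) i = Re c * Im (w i)" if "i < n" for i
  proof -
    have "Re (nbr_sum n E w i) = Re (c * w i)" "Im (nbr_sum n E w i) = Im (c * w i)"
      using w(2) that by simp_all
    then show ?thesis
      using \<open>Im c = 0\<close> by (simp add: nbr_sum_def if_distrib cong: if_cong)
  qed
  moreover have "(\<exists>i<n. Re (w i) \<noteq> 0) \<or> (\<exists>i<n. Im (w i) \<noteq> 0)"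
    using w(1) complex_eqI by fastforce
  ultimately have "\<exists>f. (\<exists>i<n. f i \<noteq> 0) \<and> (\<forall>i<n. nbr_sum n E f i = Re c * f i)"
    by (elim disjE) (intro exI[of _ "\<lambda>j. Re (w j)"] exI[of _ "\<lambda>j. Im (w j)"]; auto)+
  then show ?thesis
    unfolding adj_matrix_eq_adjacency_mat eigenvalue_adjacency_mat_iff by blast
qed

lemma spec_rad_eigenvalue:
  "n > 0 \<Longrightarrow> (\<And>i j. E i j \<Longrightarrow> E j i) \<Longrightarrow> eigenvalue (adj_matrix n E) (spec_rad n E)"
  unfolding spec_rad_def using symmetric_adj_matrix_has_eigenvalue[of n E]
    Max_in[OF finite_eigenvalues_adj_matrix[of n E]] by auto

section \<open>Quadratic forms and test vectors\<close>

definition quad_form :: "nat \<Rightarrow> (nat \<Rightarrow> nat \<Rightarrow> bool) \<Rightarrow> (nat \<Rightarrow> real) \<Rightarrow> real" where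
  "quad_form n E y = (\<Sum>i<n. \<Sum>j<n. if E i j then y i * y j else 0)"

definition sq_norm :: "nat \<Rightarrow> (nat \<Rightarrow> real) \<Rightarrow> real" where
  "sq_norm n y = (\<Sum>i<n. (y i)\<^sup>2)"

lemma sq_norm_pos: "\<exists>i<n. y i \<noteq> 0 \<Longrightarrow> sq_norm n y > 0"
proof -
  assume "\<exists>i<n. y i \<noteq> 0"
  then obtain i where "i < n" "y i \<noteq> 0" by blast
  then have "0 < (y i)\<^sup>2" "(y i)\<^sup>2 \<le> sq_norm n y"
    unfolding sq_norm_def by (auto intro!: member_le_sum)
  then show ?thesis by linarith
qed

lemma quad_form_eq_sum_nbr_sum: "quad_form n E y = (\<Sum>i<n. y i * nbr_sum n E y i)"
  unfolding quad_form_def nbr_sum_def by (simp add: sum_distrib_left if_distrib cong: if_cong)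

lemma quad_form_mono:
  assumes "\<And>i j. i < n \<Longrightarrow> j < n \<Longrightarrow> E i j \<Longrightarrow> E' i j" and "\<And>i. y i \<ge> 0"
  shows "quad_form n E y \<le> quad_form n E' y"
  unfolding quad_form_def using assms by (intro sum_mono) auto

lemma quad_form_exchange:
  assumes y: "\<And>i. y i \<ge> 0"
    and M: "M \<subseteq> {(i, j). i < n \<and> j < n \<and> H i j \<and> \<not> G i j}"
    and R: "R \<subseteq> {..<n} \<times> {..<n}"
    and GH: "\<And>i j. i < n \<Longrightarrow> j < n \<Longrightarrow> G i j \<Longrightarrow> H i j \<or> (i, j) \<in> R"
  shows "quad_form n G y + (\<Sum>(i, j)\<in>M. y i * y j) \<le> quad_form n H y + (\<Sum>(i, j)\<in>R. y i * y j)"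
proof -
  let ?sq = "{..<n} \<times> {..<n}"
  have pair_sum: "(\<Sum>(i, j)\<in>A. y i * y j) = (\<Sum>(i, j)\<in>?sq. if (i, j) \<in> A then y i * y j else 0)"
    if "A \<subseteq> ?sq" for A
    using that by (simp add: sum.inter_restrict[symmetric] Int_absorb1 case_prod_unfold if_distrib cong: if_cong)
  have form: "quad_form n E y = (\<Sum>(i, j)\<in>?sq. if E i j then y i * y j else 0)" for E
    unfolding quad_form_def by (simp add: sum.cartesian_product)
  have "(if G i j then y i * y j else 0) + (if (i, j) \<in> M then y i * y j else 0)
      \<le> (if H i j then y i * y j else 0) + (if (i, j) \<in> R then y i * y j else 0)"
    if "i < n" "j < n" for i j
    using GH[OF that] M mult_nonneg_nonneg[OF y[of i] y[of j]] by auto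
  then have "(\<Sum>(i, j)\<in>?sq. (if G i j then y i * y j else 0) + (if (i, j) \<in> M then y i * y j else 0))
     \<le> (\<Sum>(i, j)\<in>?sq. (if H i j then y i * y j else 0) + (if (i, j) \<in> R then y i * y j else 0))"
    by (intro sum_mono) auto
  moreover have "M \<subseteq> ?sq"
    using M by auto
  ultimately show ?thesis
    unfolding form pair_sum[OF \<open>M \<subseteq> ?sq\<close>] pair_sum[OF R] by (simp add: split_def sum.distrib)
qed

lemma sub_eigenvector_quad_form:
  assumes "\<And>i. y i \<ge> 0" and "\<And>i. i < n \<Longrightarrow> l * y i \<le> nbr_sum n E y i"
  shows "l * sq_norm n y \<le> quad_form n E y"
proof -
  have "l * sq_norm n y = (\<Sum>i<n. y i * (l * y i))"
    unfolding sq_norm_def by (simp add: sum_distrib_left power2_eq_square ac_simps)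
  also have "\<dots> \<le> quad_form n E y"
    unfolding quad_form_eq_sum_nbr_sum using assms by (intro sum_mono mult_left_mono) auto
  finally show ?thesis .
qed

lemma eigenvalue_abs_sub_eigenvector:
  assumes "eigenvalue (adj_matrix n E) l"
  obtains y where "\<And>i. y i \<ge> 0" "\<exists>i<n. y i \<noteq> 0" "\<And>i. i < n \<Longrightarrow> \<bar>l\<bar> * y i \<le> nbr_sum n E y i"
proof -
  obtain v where v: "\<exists>i<n. v i \<noteq> 0" "\<forall>i<n. nbr_sum n E v i = l * v i"
    using assms unfolding adj_matrix_eq_adjacency_mat eigenvalue_adjacency_mat_iff by blast
  have "\<bar>l\<bar> * \<bar>v i\<bar> \<le> nbr_sum n E (\<lambda>j. \<bar>v j\<bar>) i" if "i < n" for i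
  proof -
    have "\<bar>l\<bar> * \<bar>v i\<bar> = \<bar>\<Sum>j<n. if E i j then v j else 0\<bar>"
      using v(2) that by (simp add: nbr_sum_def abs_mult)
    also have "\<dots> \<le> (\<Sum>j<n. \<bar>if E i j then v j else 0\<bar>)"
      by (rule sum_abs)
    finally show ?thesis
      by (simp add: nbr_sum_def if_distrib cong: if_cong)
  qed
  then show ?thesis
    using v(1) by (intro that[of "\<lambda>i. \<bar>v i\<bar>"]) auto
qed

lemma spec_rad_le_of_sub_eigenvectors:
  assumes "\<And>y. (\<And>i. y i \<ge> 0) \<Longrightarrow> quad_form n E y \<le> \<mu> * sq_norm n y"
    and "eigenvalue (adj_matrix n E) l"
  shows "l \<le> \<mu>"
proof -
  obtain y where y: "\<And>i. y i \<ge> 0" "\<exists>i<n. y i \<noteq> 0" "\<And>i. i < n \<Longrightarrow> \<bar>l\<bar> * y i \<le> nbr_sum n E y i"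
    using eigenvalue_abs_sub_eigenvector[OF assms(2)] by blast
  have "l * sq_norm n y \<le> \<bar>l\<bar> * sq_norm n y"
    using sq_norm_pos[OF y(2)] by (intro mult_right_mono) auto
  also have "\<dots> \<le> quad_form n E y"
    by (rule sub_eigenvector_quad_form[OF y(1) y(3)])
  also have "\<dots> \<le> \<mu> * sq_norm n y"
    using assms(1) y(1) by blast
  finally show ?thesis
    using sq_norm_pos[OF y(2)] by simp
qed

text \<open>A positive test vector \<open>p\<close> with \<open>A p \<le> \<mu> p\<close> bounds the quadratic form by \<open>\<mu>\<close>; the
  defect is the energy \<open>\<Sum> p\<^sub>i p\<^sub>j (z\<^sub>i/p\<^sub>i - z\<^sub>j/p\<^sub>j)\<^sup>2 / 2\<close> over the edges.\<close>

locale test_vector =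
  fixes n :: nat and E :: "nat \<Rightarrow> nat \<Rightarrow> bool" and p :: "nat \<Rightarrow> real" and \<mu> :: real
  assumes sym: "\<And>i j. i < n \<Longrightarrow> j < n \<Longrightarrow> E i j \<Longrightarrow> E j i"
    and pos: "\<And>i j. i < n \<Longrightarrow> j < n \<Longrightarrow> E i j \<Longrightarrow> p i > 0"
    and sub: "\<And>i. i < n \<Longrightarrow> p i > 0 \<Longrightarrow> nbr_sum n E p i \<le> \<mu> * p i"
    and nonneg: "\<mu> \<ge> 0"
begin

definition energy_term :: "(nat \<Rightarrow> real) \<Rightarrow> nat \<Rightarrow> nat \<Rightarrow> real" where
  "energy_term z i j = (if E i j then (z i * p j - z j * p i)\<^sup>2 / (2 * p i * p j) else 0)"

lemma energy_term_nonneg: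
  assumes "i < n" "j < n"
  shows "energy_term z i j \<ge> 0"
proof (cases "E i j")
  case True
  then have "p i > 0" "p j > 0"
    using pos sym assms by blast+
  then show ?thesis
    unfolding energy_term_def by simp
qed (simp add: energy_term_def)

lemma quad_form_plus_energy_le: "quad_form n E z + (\<Sum>i<n. \<Sum>j<n. energy_term z i j) \<le> \<mu> * sq_norm n z"
proof -
  define A where "A i j = (if E i j then (z i)\<^sup>2 * p j / (2 * p i) else 0)" for i j
  have split: "(if E i j then z i * z j else 0) + energy_term z i j = A i j + A j i"
    if "i < n" "j < n" for i j
  proof (cases "E i j")
    case True
    then have "E j i" "p i > 0" "p j > 0"
      using sym pos that by blast+
    with True show ?thesis
      unfolding A_def energy_term_def by (simp add: field_simps power2_eq_square)
  qed (use sym that in \<open>auto simp: A_def energy_term_def\<close>)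
  have row: "2 * (\<Sum>j<n. A i j) \<le> \<mu> * (z i)\<^sup>2" if "i < n" for i
  proof (cases "p i > 0")
    case True
    have "2 * (\<Sum>j<n. A i j) = ((z i)\<^sup>2 / p i) * nbr_sum n E p i"
      unfolding A_def nbr_sum_def sum_distrib_left by (intro sum.cong) auto
    also have "\<dots> \<le> ((z i)\<^sup>2 / p i) * (\<mu> * p i)"
      using sub[OF that True] True by (intro mult_left_mono) auto
    finally show ?thesis
      using True by (simp add: ac_simps)
  next
    case False
    then have "A i j = 0" if "j < n" for j
      using pos[OF \<open>i < n\<close> that] unfolding A_def by auto
    then show ?thesis
      using nonneg by simp
  qed
  have "quad_form n E z + (\<Sum>i<n. \<Sum>j<n. energy_term z i j) = (\<Sum>i<n. \<Sum>j<n. A i j + A j i)"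
    unfolding quad_form_def sum.distrib[symmetric] using split by (intro sum.cong refl) auto
  also have "\<dots> = (\<Sum>i<n. 2 * (\<Sum>j<n. A i j))"
    by (simp add: sum.distrib sum.swap[of "\<lambda>i j. A j i"] sum_distrib_left[symmetric])
  also have "\<dots> \<le> (\<Sum>i<n. \<mu> * (z i)\<^sup>2)"
    using row by (intro sum_mono) auto
  also have "\<dots> = \<mu> * sq_norm n z"
    by (simp add: sq_norm_def sum_distrib_left)
  finally show ?thesis .
qed

lemma energy_row_nonneg: "i < n \<Longrightarrow> (\<Sum>j<n. energy_term z i j) \<ge> 0"
  by (intro sum_nonneg) (simp add: energy_term_nonneg)

lemma energy_nonneg: "(\<Sum>i<n. \<Sum>j<n. energy_term z i j) \<ge> 0"
  by (intro sum_nonneg) (simp add: energy_term_nonneg)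

lemma quad_form_le: "quad_form n E z \<le> \<mu> * sq_norm n z"
  using quad_form_plus_energy_le[of z] energy_nonneg[of z] by simp

lemma quad_form_eq_imp_zero_iff:
  assumes eq: "quad_form n E z = \<mu> * sq_norm n z" and ij: "i < n" "j < n" "E i j"
  shows "z i = 0 \<longleftrightarrow> z j = 0"
proof -
  have "(\<Sum>i<n. \<Sum>j<n. energy_term z i j) \<le> 0"
    using quad_form_plus_energy_le[of z] eq by linarith
  then have "(\<Sum>i<n. \<Sum>j<n. energy_term z i j) = 0"
    using energy_nonneg[of z] by simp
  then have "(\<Sum>j<n. energy_term z i j) = 0"
    using sum_nonneg_eq_0_iff[of "{..<n}" "\<lambda>i. \<Sum>j<n. energy_term z i j"] energy_row_nonneg ij(1)
    by auto
  then have "energy_term z i j = 0"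
    using sum_nonneg_eq_0_iff[of "{..<n}" "energy_term z i"] energy_term_nonneg ij(1,2) by auto
  moreover have "p i > 0" "p j > 0"
    using pos sym ij by blast+
  ultimately have "z i * p j = z j * p i"
    using ij(3) unfolding energy_term_def by simp
  then show ?thesis
    using \<open>p i > 0\<close> \<open>p j > 0\<close> by auto
qed

lemma spec_rad_eq:
  assumes eig: "\<And>i. i < n \<Longrightarrow> nbr_sum n E p i = \<mu> * p i" and nz: "\<exists>i<n. p i \<noteq> 0"
  shows "spec_rad n E = \<mu>"
proof -
  have "eigenvalue (adj_matrix n E) \<mu>"
    unfolding adj_matrix_eq_adjacency_mat eigenvalue_adjacency_mat_iff using eig nz by blast
  moreover have "l \<le> \<mu>" if "eigenvalue (adj_matrix n E) l" for l
    using spec_rad_le_of_sub_eigenvectors[OF quad_form_le that] .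
  ultimately show ?thesis
    unfolding spec_rad_def using finite_eigenvalues_adj_matrix by (intro Max_eqI) auto
qed

end

definition relabel :: "(nat \<Rightarrow> nat) \<Rightarrow> (nat \<Rightarrow> nat \<Rightarrow> bool) \<Rightarrow> nat \<Rightarrow> nat \<Rightarrow> bool" where
  "relabel \<pi> E i j \<longleftrightarrow> E (\<pi> i) (\<pi> j)"

lemma nbr_sum_relabel:
  assumes \<pi>: "bij_betw \<pi> {..<n} {..<n}" and "\<And>j. j < n \<Longrightarrow> E' i j \<longleftrightarrow> E (\<pi> i) (\<pi> j)"
  shows "nbr_sum n E' (\<lambda>j. f (\<pi> j)) i = nbr_sum n E f (\<pi> i)"
proof -
  have "nbr_sum n E' (\<lambda>j. f (\<pi> j)) i = (\<Sum>j<n. (\<lambda>j'. if E (\<pi> i) j' then f j' else 0) (\<pi> j))"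
    unfolding nbr_sum_def using assms(2) by (intro sum.cong) auto
  also have "\<dots> = nbr_sum n E f (\<pi> i)"
    unfolding nbr_sum_def by (rule sum.reindex_bij_betw[OF \<pi>])
  finally show ?thesis .
qed

lemma test_vector_relabel:
  assumes "test_vector n E p \<mu>" and \<pi>: "bij_betw \<pi> {..<n} {..<n}"
  shows "test_vector n (relabel \<pi> E) (\<lambda>i. p (\<pi> i)) \<mu>"
proof -
  interpret test_vector n E p \<mu> by fact
  have \<pi>n: "i < n \<Longrightarrow> \<pi> i < n" for i
    using \<pi> by (auto simp: bij_betw_def)
  show ?thesis
  proof
    show "relabel \<pi> E j i" if "i < n" "j < n" "relabel \<pi> E i j" for i j
      using sym \<pi>n that unfolding relabel_def by blast
    show "p (\<pi> i) > 0" if "i < n" "j < n" "relabel \<pi> E i j" for i j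
      using pos \<pi>n that unfolding relabel_def by blast
    show "nbr_sum n (relabel \<pi> E) (\<lambda>i. p (\<pi> i)) i \<le> \<mu> * p (\<pi> i)" if "i < n" "p (\<pi> i) > 0" for i
      using sub[OF \<pi>n that(2)] that nbr_sum_relabel[OF \<pi>, of "relabel \<pi> E" i E p]
      by (simp add: relabel_def)
  qed (rule nonneg)
qed

lemma eigenvalue_adj_matrix_iso:
  assumes iso: "graph_iso n G H" and ev: "eigenvalue (adj_matrix n H) l"
  shows "eigenvalue (adj_matrix n G) l"
proof -
  obtain \<pi> where \<pi>: "bij_betw \<pi> {..<n} {..<n}" "\<And>i j. i < n \<Longrightarrow> j < n \<Longrightarrow> G i j \<longleftrightarrow> H (\<pi> i) (\<pi> j)"
    using iso unfolding graph_iso_def by blast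
  obtain v where v: "\<exists>i<n. v i \<noteq> 0" "\<forall>i<n. nbr_sum n H v i = l * v i"
    using ev unfolding adj_matrix_eq_adjacency_mat eigenvalue_adjacency_mat_iff by blast
  have \<pi>n: "i < n \<Longrightarrow> \<pi> i < n" for i
    using \<pi>(1) by (auto simp: bij_betw_def)
  have "\<exists>i<n. v (\<pi> i) \<noteq> 0"
    using v(1) \<pi>(1) unfolding bij_betw_def by (metis imageE lessThan_iff)
  moreover have "\<forall>i<n. nbr_sum n G (\<lambda>j. v (\<pi> j)) i = l * v (\<pi> i)"
  proof (intro allI impI)
    fix i assume "i < n"
    then have "nbr_sum n G (\<lambda>j. v (\<pi> j)) i = nbr_sum n H v (\<pi> i)"
      using \<pi>(2) by (intro nbr_sum_relabel[OF \<pi>(1)])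
    then show "nbr_sum n G (\<lambda>j. v (\<pi> j)) i = l * v (\<pi> i)"
      using v(2) \<pi>n[OF \<open>i < n\<close>] by simp
  qed
  ultimately show ?thesis
    unfolding adj_matrix_eq_adjacency_mat eigenvalue_adjacency_mat_iff
    by (intro exI[of _ "\<lambda>j. v (\<pi> j)"] conjI)
qed

lemma graph_iso_sym:
  assumes "graph_iso n G H"
  shows "graph_iso n H G"
proof -
  obtain f where f: "bij_betw f {..<n} {..<n}" "\<forall>i<n. \<forall>j<n. G i j \<longleftrightarrow> H (f i) (f j)"
    using assms unfolding graph_iso_def by blast
  define g where "g = the_inv_into {..<n} f"
  have g: "bij_betw g {..<n} {..<n}"
    unfolding g_def by (rule bij_betw_the_inv_into[OF f(1)])
  have "a < n \<Longrightarrow> f (g a) = a" for a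
    unfolding g_def using f(1) by (intro f_the_inv_into_f_bij_betw) auto
  moreover have "a < n \<Longrightarrow> g a < n" for a
    using g by (auto simp: bij_betw_def)
  ultimately have "\<forall>a<n. \<forall>b<n. H a b \<longleftrightarrow> G (g a) (g b)"
    using f(2) by metis
  then show ?thesis
    unfolding graph_iso_def using g by blast
qed

lemma spec_rad_graph_iso:
  assumes "graph_iso n G H"
  shows "spec_rad n G = spec_rad n H"
proof -
  have "{x. eigenvalue (adj_matrix n G) x} = {x. eigenvalue (adj_matrix n H) x}"
    using eigenvalue_adj_matrix_iso[OF assms] eigenvalue_adj_matrix_iso[OF graph_iso_sym[OF assms]]
    by blast
  then show ?thesis
    unfolding spec_rad_def by simp
qed

section \<open>The extremal graphs \<open>H\<^sub>n\<^sub>,\<^sub>k\<close>\<close>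

lemma H_graph_sym: "H_graph n k i j \<Longrightarrow> H_graph n k j i"
  unfolding H_graph_def by auto

text \<open>The Perron vector of \<open>H\<^sub>n\<^sub>,\<^sub>k\<close> is constant on each of the three parts
  \<open>K\<^sub>k\<^sub>-\<^sub>1\<close>, \<open>K\<^sub>n\<^sub>-\<^sub>k\<close> and \<open>K\<^sub>1\<close>.\<close>

definition H_weight :: "nat \<Rightarrow> nat \<Rightarrow> real \<Rightarrow> real \<Rightarrow> nat \<Rightarrow> real" where
  "H_weight n s b c j = (if j < s then 1 else if j < n - 1 then b else c)"

lemma sum_H_weight_clique:
  assumes "s \<le> n - 1"
  shows "(\<Sum>j<n - 1. H_weight n s b c j) = real s + real (n - 1 - s) * b"
proof -
  have "{..<n - 1} = {..<s} \<union> {s..<n - 1}" "{..<s} \<inter> {s..<n - 1} = {}"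
    using assms by auto
  then have "(\<Sum>j<n - 1. H_weight n s b c j) = (\<Sum>j<s. H_weight n s b c j) + (\<Sum>j\<in>{s..<n - 1}. H_weight n s b c j)"
    by (simp add: sum.union_disjoint)
  also have "\<dots> = (\<Sum>j<s. 1) + (\<Sum>j\<in>{s..<n - 1}. b)"
    by (intro arg_cong2[where f = "(+)"] sum.cong) (auto simp: H_weight_def)
  finally show ?thesis by simp
qed

lemma sum_H_weight:
  assumes "s \<le> n - 1" "n \<ge> 1"
  shows "(\<Sum>j<n. H_weight n s b c j) = real s + real (n - 1 - s) * b + c"
proof -
  have "(\<Sum>j<n. H_weight n s b c j) = (\<Sum>j<n - 1. H_weight n s b c j) + H_weight n s b c (n - 1)"
    using sum.lessThan_Suc[of "H_weight n s b c" "n - 1"] assms(2) by simp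
  then show ?thesis
    using sum_H_weight_clique[OF assms(1)] assms by (simp add: H_weight_def)
qed

lemma sum_remove:
  fixes f :: "nat \<Rightarrow> real"
  assumes "i < m"
  shows "(\<Sum>j<m. if j \<noteq> i then f j else 0) = (\<Sum>j<m. f j) - f i"
proof -
  have "{..<m} \<inter> {j. j \<noteq> i} = {..<m} - {i}"
    by auto
  then show ?thesis
    using assms by (simp add: sum.If_cases sum_diff1)
qed

lemma nbr_sum_H_graph:
  assumes k: "1 \<le> k" "k < n" and i: "i < n"
  shows "nbr_sum n (H_graph n k) (H_weight n (k - 1) b c) i =
     (if i < k - 1 then real (k - 1) - 1 + real (n - k) * b + c
      else if i < n - 1 then real (k - 1) + (real (n - k) - 1) * b
      else real (k - 1))"
proof -
  let ?p = "H_weight n (k - 1) b c"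
  have nk: "n - 1 - (k - 1) = n - k"
    using k by simp
  consider "i < k - 1" | "k - 1 \<le> i" "i < n - 1" | "i = n - 1"
    using i by linarith
  then show ?thesis
  proof cases
    case 1
    have "nbr_sum n (H_graph n k) ?p i = (\<Sum>j<n. if j \<noteq> i then ?p j else 0)"
      unfolding nbr_sum_def using 1 k i by (intro sum.cong) (auto simp: H_graph_def)
    also have "\<dots> = real (k - 1) - 1 + real (n - k) * b + c"
      using sum_remove[OF i, of ?p] sum_H_weight[of "k - 1" n b c] k 1 by (simp add: H_weight_def nk)
    finally show ?thesis
      using 1 by simp
  next
    case 2
    have "nbr_sum n (H_graph n k) ?p i = (\<Sum>j<n. if j < n - 1 then (if j \<noteq> i then ?p j else 0) else 0)"
      unfolding nbr_sum_def using 2 k i by (intro sum.cong) (auto simp: H_graph_def)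
    also have "\<dots> = (\<Sum>j<n - 1. if j \<noteq> i then ?p j else 0)"
      by (intro sum.mono_neutral_cong_right) auto
    also have "\<dots> = real (k - 1) + (real (n - k) - 1) * b"
      using sum_remove[OF 2(2), of ?p] sum_H_weight_clique[of "k - 1" n b c] k 2
      by (simp add: H_weight_def nk algebra_simps)
    finally show ?thesis
      using 2 by simp
  next
    case 3
    have "nbr_sum n (H_graph n k) ?p i = (\<Sum>j<n. if j < k - 1 then 1 else 0)"
      unfolding nbr_sum_def using 3 k by (intro sum.cong) (auto simp: H_graph_def H_weight_def)
    also have "\<dots> = real (card ({..<n} \<inter> {j. j < k - 1}))"
      by (simp add: sum.If_cases)
    also have "{..<n} \<inter> {j. j < k - 1} = {..<k - 1}"
      using k by auto
    finally have "nbr_sum n (H_graph n k) ?p i = real (k - 1)"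
      by simp
    moreover have "\<not> i < k - 1" "\<not> i < n - 1"
      using 3 k by auto
    ultimately show ?thesis
      by simp
  qed
qed

lemma H_eigenvalue_equation_root:
  fixes S T :: real
  assumes S: "S \<ge> 1" and T: "T \<ge> 1"
  shows "\<exists>x. S + T - 1 < x \<and> x \<le> S + T \<and> x - (S - 1) - T * S / (x - T + 1) - S / x = 0"
proof -
  define f where "f x = x - (S - 1) - T * S / (x - T + 1) - S / x" for x
  have "continuous_on {S + T - 1 .. S + T} f"
    unfolding f_def using S T by (intro continuous_intros) (auto simp: field_simps)
  moreover have "f (S + T - 1) < 0"
    using S T by (simp add: f_def algebra_simps)
  moreover have "f (S + T) > 0"
  proof -
    have "f (S + T) = (S + T + 1) / (S + 1) - S / (S + T)"
      using S by (simp add: f_def field_simps)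
    moreover have "S / (S + T) < 1" "(S + T + 1) / (S + 1) \<ge> 1"
      using S T by auto
    ultimately show ?thesis by linarith
  qed
  ultimately obtain x where x: "S + T - 1 \<le> x" "x \<le> S + T" "f x = 0"
    using IVT'[of f "S + T - 1" 0 "S + T"] by auto
  moreover have "x \<noteq> S + T - 1"
    using x(3) \<open>f (S + T - 1) < 0\<close> by auto
  ultimately show ?thesis
    unfolding f_def by (intro exI[of _ x]) auto
qed

lemma H_graph_eigenvector:
  assumes k: "1 \<le> k" "k < n" and n: "3 \<le> n"
  obtains \<mu> b c where "\<mu> \<ge> real n - 2" "b > 0" "c \<ge> 0" "2 \<le> k \<Longrightarrow> c > 0"
    "\<And>i. i < n \<Longrightarrow> nbr_sum n (H_graph n k) (H_weight n (k - 1) b c) i = \<mu> * H_weight n (k - 1) b c i"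
proof (cases "k = 1")
  case True
  show ?thesis
  proof (rule that[of "real n - 2" 1 0])
    show "nbr_sum n (H_graph n k) (H_weight n (k - 1) 1 0) i = (real n - 2) * H_weight n (k - 1) 1 0 i"
      if "i < n" for i
      using nbr_sum_H_graph[OF k that, of 1 0] True k that by (auto simp: H_weight_def)
  qed (use True in auto)
next
  case False
  define S where "S = real (k - 1)"
  define T where "T = real (n - k)"
  have S: "S \<ge> 1" and T: "T \<ge> 1" and nST: "real n = S + T + 1"
    using False k unfolding S_def T_def by auto
  obtain x where x: "S + T - 1 < x" "x \<le> S + T" "x - (S - 1) - T * S / (x - T + 1) - S / x = 0"
    using H_eigenvalue_equation_root[OF S T] by blast
  have xT: "x - T + 1 > 0" and x0: "x > 0"
    using x S T by auto
  define b where "b = S / (x - T + 1)"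
  define c where "c = S / x"
  show ?thesis
  proof (rule that[of x b c])
    show "real n - 2 \<le> x" "b > 0" "c \<ge> 0" "c > 0"
      using x nST xT x0 S unfolding b_def c_def by auto
    fix i assume i: "i < n"
    have "S - 1 + T * b + c = x"
      using x(3) unfolding b_def c_def by (simp add: algebra_simps)
    moreover have "S + (T - 1) * b = x * b"
      using xT unfolding b_def by (simp add: field_simps)
    moreover have "S = x * c"
      using x0 unfolding c_def by simp
    ultimately show "nbr_sum n (H_graph n k) (H_weight n (k - 1) b c) i = x * H_weight n (k - 1) b c i"
      using nbr_sum_H_graph[OF k i, of b c] unfolding S_def T_def H_weight_def by auto
  qed
qed

lemma H_graph_test_vector:
  assumes k: "1 \<le> k" "k < n" and n: "3 \<le> n"
  obtains p where "test_vector n (H_graph n k) p (spec_rad n (H_graph n k))"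
    "\<And>i. i < n - 1 \<Longrightarrow> p i > 0" "spec_rad n (H_graph n k) \<ge> real n - 2"
proof -
  obtain \<mu> b c where \<mu>: "\<mu> \<ge> real n - 2" and b: "b > 0" and c: "c \<ge> 0" "2 \<le> k \<Longrightarrow> c > 0"
    and eig: "\<And>i. i < n \<Longrightarrow> nbr_sum n (H_graph n k) (H_weight n (k - 1) b c) i = \<mu> * H_weight n (k - 1) b c i"
    using H_graph_eigenvector[OF k n] by blast
  let ?p = "H_weight n (k - 1) b c"
  have clique_pos: "i < n - 1 \<Longrightarrow> ?p i > 0" for i
    using b by (simp add: H_weight_def)
  interpret test_vector n "H_graph n k" ?p \<mu>
  proof
    show "H_graph n k j i" if "H_graph n k i j" for i j
      using that by (rule H_graph_sym)
    show "?p i > 0" if "H_graph n k i j" for i j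
      using that b c unfolding H_graph_def H_weight_def by auto
    show "nbr_sum n (H_graph n k) ?p i \<le> \<mu> * ?p i" if "i < n" for i
      using eig[OF that] by simp
    show "\<mu> \<ge> 0"
      using \<mu> n by simp
  qed
  have "spec_rad n (H_graph n k) = \<mu>"
  proof (rule spec_rad_eq)
    show "\<exists>i<n. ?p i \<noteq> 0"
      using clique_pos[of 0] n by (intro exI[of _ 0]) auto
  qed (rule eig)
  then show ?thesis
    using that test_vector_axioms clique_pos \<mu> by simp
qed

lemma spec_rad_H_graph_ge:
  assumes "1 \<le> k" "k < n" "3 \<le> n"
  shows "real n - 2 \<le> spec_rad n (H_graph n k)"
  by (rule H_graph_test_vector[OF assms])

lemma quad_form_relabel_H_graph_le:
  assumes "1 \<le> k" "k < n" "3 \<le> n" and \<pi>: "bij_betw \<pi> {..<n} {..<n}"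
  shows "quad_form n (relabel \<pi> (H_graph n k)) z \<le> spec_rad n (H_graph n k) * sq_norm n z"
proof -
  obtain p where "test_vector n (H_graph n k) p (spec_rad n (H_graph n k))"
    using H_graph_test_vector[OF assms(1-3)] by blast
  then show ?thesis
    using test_vector.quad_form_le[OF test_vector_relabel[OF _ \<pi>]] by blast
qed

text \<open>Equality forces \<open>z\<close> to vanish nowhere on the edges: a zero propagates along edges
  (as \<open>z/p\<close> is constant on them) to the whole clique \<open>K\<^sub>n\<^sub>-\<^sub>1\<close>, which meets every edge,
  so the quadratic form would vanish.\<close>

lemma quad_form_relabel_H_graph_eq_imp_nonzero:
  assumes k: "1 \<le> k" "k < n" and n: "3 \<le> n" and \<pi>: "bij_betw \<pi> {..<n} {..<n}"
    and eq: "quad_form n (relabel \<pi> (H_graph n k)) z = spec_rad n (H_graph n k) * sq_norm n z"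
    and nz: "\<exists>i<n. z i \<noteq> 0"
    and ij: "i < n" "j < n" "relabel \<pi> (H_graph n k) i j"
  shows "z i \<noteq> 0"
proof
  assume "z i = 0"
  let ?H = "relabel \<pi> (H_graph n k)" and ?\<mu> = "spec_rad n (H_graph n k)"
  obtain p where p: "test_vector n (H_graph n k) p ?\<mu>" and \<mu>: "?\<mu> \<ge> real n - 2"
    using H_graph_test_vector[OF k n] by blast
  interpret test_vector n ?H "\<lambda>i. p (\<pi> i)" ?\<mu>
    using test_vector_relabel[OF p \<pi>] .
  have \<pi>n: "a < n \<Longrightarrow> \<pi> a < n" for a
    using \<pi> by (auto simp: bij_betw_def)
  have \<pi>inj: "a < n \<Longrightarrow> b < n \<Longrightarrow> \<pi> a = \<pi> b \<Longrightarrow> a = b" for a b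
    using \<pi> by (auto simp: bij_betw_def inj_on_def)
  define K where "K = {a. a < n \<and> \<pi> a < n - 1}"
  have clique: "?H a b" if "a \<in> K" "b \<in> K" "a \<noteq> b" for a b
  proof -
    have "\<pi> a \<noteq> \<pi> b"
      using \<pi>inj[of a b] that unfolding K_def by auto
    with that show ?thesis
      unfolding K_def relabel_def H_graph_def by (simp add: \<pi>n)
  qed
  have cover: "a \<in> K \<or> b \<in> K" if "a < n" "b < n" "?H a b" for a b
  proof -
    have "\<pi> a < n - 1 \<or> \<pi> b < n - 1"
      using that(3) k unfolding relabel_def H_graph_def by linarith
    then show ?thesis
      using that(1,2) unfolding K_def by blast
  qed
  obtain a where a: "a \<in> K" "z a = 0"
    using cover[OF ij] \<open>z i = 0\<close> quad_form_eq_imp_zero_iff[OF eq ij] by blast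
  have zK: "z b = 0" if "b \<in> K" for b
    using a that clique[OF a(1) that] quad_form_eq_imp_zero_iff[OF eq] unfolding K_def by fastforce
  have "quad_form n ?H z = 0"
    unfolding quad_form_def using cover zK by (intro sum.neutral ballI) auto
  then have "?\<mu> * sq_norm n z = 0"
    using eq by simp
  then show False
    using \<mu> n sq_norm_pos[OF nz] by simp
qed

lemma exists_bij_pendant:
  assumes v: "v < n" and N: "N \<subseteq> {..<n} - {v}" and card: "card N \<le> m" and m: "m \<le> n - 1"
  obtains \<pi> where "bij_betw \<pi> {..<n} {..<n}" "\<pi> v = n - 1" "\<pi> ` N \<subseteq> {..<m}"
proof -
  define d where "d = card N"
  define R where "R = {..<n} - {v} - N"
  have "finite N"
    using N finite_subset by blast
  have "card R = n - 1 - d"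
    using N v \<open>finite N\<close> unfolding R_def d_def by (simp add: card_Diff_subset)
  obtain f1 where f1: "bij_betw f1 N {..<d}"
    using \<open>finite N\<close> unfolding d_def by (metis finite_same_card_bij finite_lessThan card_lessThan)
  obtain f2 where f2: "bij_betw f2 R {d..<n - 1}"
    using \<open>card R = n - 1 - d\<close>
    by (metis R_def card_atLeastLessThan finite_Diff finite_atLeastLessThan finite_lessThan finite_same_card_bij)
  define \<pi> where "\<pi> x = (if x = v then n - 1 else if x \<in> N then f1 x else f2 x)" for x
  have "bij_betw \<pi> {v} {n - 1}"
    unfolding \<pi>_def by (simp add: bij_betw_def)
  moreover have b2: "bij_betw \<pi> N {..<d}"
    using f1 N unfolding \<pi>_def by (subst bij_betw_cong[where g = f1]) auto
  moreover have "bij_betw \<pi> R {d..<n - 1}"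
    using f2 unfolding \<pi>_def R_def by (subst bij_betw_cong[where g = f2]) auto
  moreover have "d \<le> n - 1"
    using card m unfolding d_def by simp
  ultimately have "bij_betw \<pi> ({v} \<union> (N \<union> R)) ({n - 1} \<union> ({..<d} \<union> {d..<n - 1}))"
    using N by (intro bij_betw_combine) (auto simp: R_def)
  moreover have "{v} \<union> (N \<union> R) = {..<n}" "{n - 1} \<union> ({..<d} \<union> {d..<n - 1}) = {..<n}"
    using N v \<open>d \<le> n - 1\<close> unfolding R_def by auto
  moreover have "\<pi> ` N \<subseteq> {..<m}"
    using b2 card unfolding bij_betw_def d_def by auto
  ultimately show ?thesis
    using that by (simp add: \<pi>_def)
qed

lemma relabel_H_graph_edge:
  assumes \<pi>: "bij_betw \<pi> {..<n} {..<n}" and v: "v < n" "\<pi> v = n - 1" and N: "\<pi> ` N \<subseteq> {..<k - 1}"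
    and ij: "i < n" "j < n" "i \<noteq> j" and iv: "i = v \<Longrightarrow> j \<in> N" and jv: "j = v \<Longrightarrow> i \<in> N"
  shows "relabel \<pi> (H_graph n k) i j"
proof -
  have \<pi>n: "x < n \<Longrightarrow> \<pi> x < n" for x
    using \<pi> by (auto simp: bij_betw_def)
  have \<pi>inj: "x < n \<Longrightarrow> y < n \<Longrightarrow> \<pi> x = \<pi> y \<Longrightarrow> x = y" for x y
    using \<pi> by (auto simp: bij_betw_def inj_on_def)
  have "x < n \<Longrightarrow> x \<noteq> v \<Longrightarrow> \<pi> x < n - 1" for x
    using \<pi>inj[of x v] \<pi>n[of x] v by fastforce
  moreover have "\<pi> i \<noteq> \<pi> j"
    using \<pi>inj[of i j] ij by blast
  ultimately show ?thesis
    using ij \<pi>n N v iv jv unfolding relabel_def H_graph_def by (cases "i = v"; cases "j = v") auto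
qed

lemma sgraph_sym: "sgraph n G \<Longrightarrow> G i j \<Longrightarrow> G j i"
  unfolding sgraph_def by blast

lemma spec_rad_sub_eigenvector:
  assumes "sgraph n G" "n > 0"
  obtains y where "\<And>i. 0 \<le> y i" "\<exists>i<n. y i \<noteq> 0" "\<And>i. i < n \<Longrightarrow> \<bar>spec_rad n G\<bar> * y i \<le> nbr_sum n G y i"
proof -
  have "eigenvalue (adj_matrix n G) (spec_rad n G)"
    using assms(2) by (intro spec_rad_eigenvalue) (auto intro: sgraph_sym[OF assms(1)])
  then show ?thesis
    using that by (rule eigenvalue_abs_sub_eigenvector)
qed

lemma subgraph_relabel_H_graph_of_low_degree:
  assumes G: "sgraph n G" and k: "1 \<le> k" "k < n" and v: "v < n" and deg: "degree n G v < k"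
  obtains \<pi> where "bij_betw \<pi> {..<n} {..<n}" "\<And>i j. G i j \<Longrightarrow> relabel \<pi> (H_graph n k) i j"
proof -
  define N where "N = {j. j < n \<and> G v j}"
  have "N \<subseteq> {..<n} - {v}" "card N \<le> k - 1"
    using G deg unfolding N_def sgraph_def degree_def by auto
  then obtain \<pi> where \<pi>: "bij_betw \<pi> {..<n} {..<n}" "\<pi> v = n - 1" "\<pi> ` N \<subseteq> {..<k - 1}"
    using exists_bij_pendant[OF v] k by (metis diff_le_mono less_imp_le_nat)
  have "relabel \<pi> (H_graph n k) i j" if "G i j" for i j
    using G that by (intro relabel_H_graph_edge[OF \<pi>(1) v \<pi>(2) \<pi>(3)]) (auto simp: N_def sgraph_def)
  with \<pi>(1) show ?thesis
    by (rule that)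
qed

lemma subgraph_eq_of_quad_form_eq:
  assumes GH: "\<And>i j. i < n \<Longrightarrow> j < n \<Longrightarrow> G i j \<Longrightarrow> H i j" and y: "\<And>i. y i \<ge> 0"
    and nz: "\<And>i j. i < n \<Longrightarrow> j < n \<Longrightarrow> H i j \<Longrightarrow> y i \<noteq> 0 \<and> y j \<noteq> 0"
    and eq: "quad_form n G y = quad_form n H y" and ij: "i < n" "j < n" "H i j"
  shows "G i j"
proof (rule ccontr)
  assume "\<not> G i j"
  have "0 < y i * y j"
    using nz[OF ij] y[of i] y[of j] by (simp add: less_eq_real_def)
  moreover have "quad_form n G y + (\<Sum>(a, b)\<in>{(i, j)}. y a * y b) \<le> quad_form n H y + (\<Sum>(a, b)\<in>{}. y a * y b)"
    using \<open>\<not> G i j\<close> ij GH by (intro quad_form_exchange[OF y]) auto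
  ultimately show False
    using eq by simp
qed

lemma spec_rad_le_H_graph_of_low_degree:
  assumes G: "sgraph n G" and k: "1 \<le> k" "k < n" and n: "3 \<le> n"
    and v: "v < n" and deg: "degree n G v < k"
  shows "spec_rad n G \<le> spec_rad n (H_graph n k)"
    and "spec_rad n G = spec_rad n (H_graph n k) \<Longrightarrow> graph_iso n G (H_graph n k)"
proof -
  let ?\<rho> = "spec_rad n G" and ?\<mu> = "spec_rad n (H_graph n k)"
  obtain \<pi> where \<pi>: "bij_betw \<pi> {..<n} {..<n}" and GH: "\<And>i j. G i j \<Longrightarrow> relabel \<pi> (H_graph n k) i j"
    using subgraph_relabel_H_graph_of_low_degree[OF G k v deg] by blast
  let ?H = "relabel \<pi> (H_graph n k)"
  obtain y where y: "\<And>i. y i \<ge> 0" "\<exists>i<n. y i \<noteq> 0" "\<And>i. i < n \<Longrightarrow> \<bar>?\<rho>\<bar> * y i \<le> nbr_sum n G y i"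
    using spec_rad_sub_eigenvector[OF G] n by auto
  have "?\<rho> * sq_norm n y \<le> \<bar>?\<rho>\<bar> * sq_norm n y"
    using sq_norm_pos[OF y(2)] by (intro mult_right_mono) auto
  also have "\<dots> \<le> quad_form n G y"
    by (rule sub_eigenvector_quad_form[OF y(1) y(3)])
  finally have QG: "?\<rho> * sq_norm n y \<le> quad_form n G y" .
  have QGH: "quad_form n G y \<le> quad_form n ?H y"
    using GH y(1) by (intro quad_form_mono) auto
  have QH: "quad_form n ?H y \<le> ?\<mu> * sq_norm n y"
    by (rule quad_form_relabel_H_graph_le[OF k n \<pi>])
  have "?\<rho> * sq_norm n y \<le> ?\<mu> * sq_norm n y"
    using QG QGH QH by linarith
  then show "?\<rho> \<le> ?\<mu>"
    using sq_norm_pos[OF y(2)] by simp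
  assume "?\<rho> = ?\<mu>"
  then have "?\<mu> * sq_norm n y \<le> quad_form n G y"
    using QG by simp
  then have eq: "quad_form n G y = quad_form n ?H y" "quad_form n ?H y = ?\<mu> * sq_norm n y"
    using QGH QH by linarith+
  have "?H j i" if "?H i j" for i j
    using that H_graph_sym unfolding relabel_def by blast
  then have "G i j" if "i < n" "j < n" "?H i j" for i j
    using quad_form_relabel_H_graph_eq_imp_nonzero[OF k n \<pi> eq(2) y(2)] GH that
    by (intro subgraph_eq_of_quad_form_eq[OF _ y(1) _ eq(1)]) blast+
  then have "\<forall>i<n. \<forall>j<n. G i j \<longleftrightarrow> H_graph n k (\<pi> i) (\<pi> j)"
    using GH unfolding relabel_def by blast
  then show "graph_iso n G (H_graph n k)"
    unfolding graph_iso_def using \<pi> by blast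
qed

section \<open>Graphs of spectral radius at least \<open>n - 2\<close>\<close>

definition nbrs :: "nat \<Rightarrow> (nat \<Rightarrow> nat \<Rightarrow> bool) \<Rightarrow> nat \<Rightarrow> nat set" where
  "nbrs n E x = {z. z < n \<and> E x z}"

definition non_nbrs :: "nat \<Rightarrow> (nat \<Rightarrow> nat \<Rightarrow> bool) \<Rightarrow> nat \<Rightarrow> nat set" where
  "non_nbrs n E x = {z. z < n \<and> z \<noteq> x \<and> \<not> E x z}"

definition non_degree :: "nat \<Rightarrow> (nat \<Rightarrow> nat \<Rightarrow> bool) \<Rightarrow> nat \<Rightarrow> nat" where
  "non_degree n E x = card (non_nbrs n E x)"

definition missing_pairs :: "nat \<Rightarrow> (nat \<Rightarrow> nat \<Rightarrow> bool) \<Rightarrow> nat \<Rightarrow> (nat \<times> nat) set" where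
  "missing_pairs n E v = {(i, j). i < n \<and> j < n \<and> i \<noteq> j \<and> i \<noteq> v \<and> j \<noteq> v \<and> \<not> E i j}"

lemma finite_nbrs [simp]: "finite (nbrs n E x)"
  unfolding nbrs_def by simp

lemma finite_non_nbrs [simp]: "finite (non_nbrs n E x)"
  unfolding non_nbrs_def by simp

lemma finite_missing_pairs [simp]: "finite (missing_pairs n E v)"
  by (rule finite_subset[of _ "{..<n} \<times> {..<n}"]) (auto simp: missing_pairs_def)

lemma card_nbrs: "card (nbrs n E x) = degree n E x"
  unfolding nbrs_def degree_def ..

lemma non_degree_plus_degree:
  assumes "sgraph n G" "u < n"
  shows "non_degree n G u + degree n G u = n - 1"
proof -
  have "non_nbrs n G u \<union> nbrs n G u = {..<n} - {u}" "non_nbrs n G u \<inter> nbrs n G u = {}"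
    using assms unfolding sgraph_def non_nbrs_def nbrs_def by auto
  then have "card (non_nbrs n G u) + card (nbrs n G u) = card ({..<n} - {u})"
    by (metis card_Un_disjoint finite_nbrs finite_non_nbrs)
  then show ?thesis
    using assms(2) unfolding non_degree_def card_nbrs by simp
qed

lemma nbr_sum_eq_sum_nbrs: "nbr_sum n E y i = (\<Sum>j\<in>nbrs n E i. y j)"
  unfolding nbr_sum_def nbrs_def by (simp add: sum.If_cases Int_def)

lemma nbr_sum_split:
  assumes "sgraph n G" "i < n"
  shows "nbr_sum n G y i + y i + (\<Sum>j\<in>non_nbrs n G i. y j) = (\<Sum>j<n. y j)"
proof -
  have "{..<n} = nbrs n G i \<union> {i} \<union> non_nbrs n G i"
    using assms unfolding sgraph_def nbrs_def non_nbrs_def by auto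
  moreover note nbr_sum_eq_sum_nbrs[of n G y i]
  moreover have "i \<notin> nbrs n G i" "i \<notin> non_nbrs n G i" "nbrs n G i \<inter> non_nbrs n G i = {}"
    using assms unfolding sgraph_def nbrs_def non_nbrs_def by auto
  ultimately show ?thesis
    by (simp add: sum.union_disjoint Int_Un_distrib2 ac_simps)
qed

lemma sum_non_nbrs_swap:
  assumes "sgraph n G"
  shows "(\<Sum>i<n. \<Sum>j\<in>non_nbrs n G i. y j) = (\<Sum>j<n. real (non_degree n G j) * y j)"
proof -
  have sym: "j \<in> non_nbrs n G i \<longleftrightarrow> i \<in> non_nbrs n G j" if "i < n" "j < n" for i j
    using assms that unfolding sgraph_def non_nbrs_def by auto
  have restrict: "(\<Sum>j\<in>non_nbrs n G i. f j) = (\<Sum>j<n. if j \<in> non_nbrs n G i then f j else 0)"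
    for i and f :: "nat \<Rightarrow> real"
  proof -
    have "non_nbrs n G i = {..<n} \<inter> non_nbrs n G i"
      by (auto simp: non_nbrs_def)
    then show ?thesis
      by (metis finite_lessThan sum.inter_restrict)
  qed
  have "(\<Sum>i<n. \<Sum>j\<in>non_nbrs n G i. y j) = (\<Sum>i<n. \<Sum>j<n. if j \<in> non_nbrs n G i then y j else 0)"
    by (simp add: restrict)
  also have "\<dots> = (\<Sum>j<n. \<Sum>i<n. if i \<in> non_nbrs n G j then y j else 0)"
    using sym by (subst sum.swap) (intro sum.cong refl, auto)
  also have "\<dots> = (\<Sum>j<n. real (non_degree n G j) * y j)"
    unfolding non_degree_def by (simp add: restrict[symmetric])
  finally show ?thesis .
qed

locale large_subeigenvector =
  fixes n :: nat and G :: "nat \<Rightarrow> nat \<Rightarrow> bool" and \<rho> :: real and y :: "nat \<Rightarrow> real"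
  assumes G: "sgraph n G" and n: "3 \<le> n" and large: "real n - 2 \<le> \<rho>"
    and nonneg: "\<And>i. 0 \<le> y i" and nonzero: "\<exists>i<n. y i \<noteq> 0"
    and sub: "\<And>i. i < n \<Longrightarrow> \<rho> * y i \<le> nbr_sum n G y i"
begin

definition mass :: real where "mass = (\<Sum>j<n. y j)"

definition level :: real where "level = mass / (real n - 1)"

lemma row_bound: "i < n \<Longrightarrow> (\<rho> + 1) * y i + (\<Sum>j\<in>non_nbrs n G i. y j) \<le> mass"
  using sub[of i] nbr_sum_split[OF G, of i y] unfolding mass_def by (simp add: algebra_simps)

lemma mass_pos: "mass > 0"
proof -
  obtain i where "i < n" "y i \<noteq> 0"
    using nonzero by blast
  moreover have "y i \<le> mass"
    unfolding mass_def using \<open>i < n\<close> nonneg by (intro member_le_sum) auto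
  ultimately show ?thesis
    using nonneg[of i] by simp
qed

lemma level_pos: "level > 0"
  unfolding level_def using mass_pos n by simp

lemma le_level: "i < n \<Longrightarrow> y i \<le> level"
proof -
  assume "i < n"
  have "(real n - 1) * y i \<le> (\<rho> + 1) * y i"
    using large nonneg[of i] by (intro mult_right_mono) auto
  also have "\<dots> \<le> mass"
    using row_bound[OF \<open>i < n\<close>] sum_nonneg[of "non_nbrs n G i" y, OF nonneg] by linarith
  finally show ?thesis
    unfolding level_def using n by (simp add: field_simps)
qed

lemma pair_ge_level:
  assumes "i < n" "j < n" "i \<noteq> j"
  shows "level \<le> y i + y j"
proof -
  have "(level - y i) + (level - y j) = (\<Sum>l\<in>{i, j}. level - y l)"
    using assms(3) by simp
  also have "\<dots> \<le> (\<Sum>l<n. level - y l)"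
    using assms le_level by (intro sum_mono2) auto
  also have "\<dots> = real n * level - mass"
    unfolding mass_def by (simp add: sum_subtractf)
  also have "\<dots> = level"
    unfolding level_def using n by (simp add: field_simps)
  finally show ?thesis by simp
qed

lemma weighted_non_degree_le: "(\<Sum>j<n. real (non_degree n G j) * y j) \<le> mass"
proof -
  have "(\<Sum>i<n. (\<rho> + 1) * y i + (\<Sum>j\<in>non_nbrs n G i. y j)) \<le> (\<Sum>i<n. mass)"
    using row_bound by (intro sum_mono) auto
  then have "(\<rho> + 1) * mass + (\<Sum>j<n. real (non_degree n G j) * y j) \<le> real n * mass"
    unfolding sum.distrib sum_non_nbrs_swap[OF G] mass_def by (simp add: sum_distrib_left)
  moreover have "(real n - 1) * mass \<le> (\<rho> + 1) * mass"
    using large mass_pos by (intro mult_right_mono) auto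
  ultimately show ?thesis
    by (simp add: algebra_simps)
qed

text \<open>All entries but the smallest are at least \<open>level / 2\<close>, so the non-degrees sum to at most
  \<open>(2 / level) mass + n = 3n - 2\<close>.\<close>

lemma sum_non_degree_le: "(\<Sum>j<n. non_degree n G j) \<le> 3 * n"
proof -
  obtain m where "is_arg_min y (\<lambda>j. j < n) m"
    using ex_is_arg_min_if_finite[of "{..<n}" y] n by (auto simp: lessThan_empty_iff)
  then have m: "m < n" "\<And>j. j < n \<Longrightarrow> y m \<le> y j"
    unfolding is_arg_min_def by (meson linorder_not_less)+
  have half: "level / 2 \<le> y j" if "j < n" "j \<noteq> m" for j
    using pair_ge_level[OF that(1) m(1) that(2)] m(2)[OF that(1)] by simp
  have pointwise: "real (non_degree n G j)
      \<le> (2 / level) * (real (non_degree n G j) * y j) + (if j = m then real n else 0)"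
    if "j < n" for j
  proof (cases "j = m")
    case True
    have "non_degree n G j \<le> n"
      unfolding non_degree_def non_nbrs_def by (rule order_trans[OF card_mono[of "{..<n}"]]) auto
    moreover have "0 \<le> (2 / level) * (real (non_degree n G j) * y j)"
      using level_pos nonneg[of j] by simp
    ultimately show ?thesis
      using True by simp
  next
    case False
    have "real (non_degree n G j) * 1 \<le> real (non_degree n G j) * (2 / level * y j)"
      using half[OF that False] level_pos by (intro mult_left_mono) (auto simp: field_simps)
    then show ?thesis
      using False by (simp add: ac_simps)
  qed
  have "real (\<Sum>j<n. non_degree n G j)
      \<le> (\<Sum>j<n. (2 / level) * (real (non_degree n G j) * y j) + (if j = m then real n else 0))"
    unfolding of_nat_sum using pointwise by (intro sum_mono) auto
  also have "\<dots> = (2 / level) * (\<Sum>j<n. real (non_degree n G j) * y j) + real n"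
    using m(1) by (simp add: sum.distrib sum_distrib_left)
  also have "\<dots> \<le> (2 / level) * mass + real n"
    using weighted_non_degree_le level_pos by (intro add_right_mono mult_left_mono) auto
  also have "(2 / level) * mass = 2 * (real n - 1)"
    unfolding level_def using mass_pos n by (simp add: field_simps)
  finally have "real (\<Sum>j<n. non_degree n G j) \<le> real (3 * n)"
    by simp
  then show ?thesis
    by (simp only: of_nat_le_iff)
qed

lemma quad_form_ge: "\<rho> * sq_norm n y \<le> quad_form n G y"
  using nonneg sub by (rule sub_eigenvector_quad_form)

lemma low_degree_entry_le:
  assumes v: "v < n" and d: "5 * degree n G v \<le> n - 2"
  shows "y v \<le> level / 5"
proof -
  have "(real n - 2) * y v \<le> \<rho> * y v"
    using large nonneg[of v] by (intro mult_right_mono) auto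
  also have "\<dots> \<le> (\<Sum>j\<in>nbrs n G v. y j)"
    using sub[OF v] by (simp add: nbr_sum_eq_sum_nbrs)
  also have "\<dots> \<le> (\<Sum>j\<in>nbrs n G v. level)"
    using le_level by (intro sum_mono) (auto simp: nbrs_def)
  also have "\<dots> = real (degree n G v) * level"
    by (simp add: card_nbrs)
  also have "\<dots> \<le> ((real n - 2) / 5) * level"
    using d n level_pos by (intro mult_right_mono) auto
  finally have "(real n - 2) * (5 * y v) \<le> (real n - 2) * level"
    by simp
  then show ?thesis
    using n by simp
qed

text \<open>The key spectral estimate: since \<open>\<rho> \<ge> \<lambda>(H\<^sub>n\<^sub>,\<^sub>\<delta>)\<close>, the non-edges of \<open>G - v\<^sub>0\<close> weigh no more
  than the edges from \<open>v\<^sub>0\<close> to any set \<open>C\<close> of neighbours leaving fewer than \<open>\<delta>\<close> others: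
  removing the edges to \<open>C\<close> and adding the non-edges turns \<open>G\<close> into a subgraph of a copy of
  \<open>H\<^sub>n\<^sub>,\<^sub>\<delta>\<close>.\<close>

lemma missing_pairs_weight_le:
  assumes \<delta>: "1 \<le> \<delta>" "\<delta> < n" and \<rho>: "spec_rad n (H_graph n \<delta>) \<le> \<rho>"
    and v: "v < n" and C: "C \<subseteq> nbrs n G v" "card (nbrs n G v - C) \<le> \<delta> - 1"
  shows "(\<Sum>(i, j)\<in>missing_pairs n G v. y i * y j) \<le> 2 * (\<Sum>j\<in>C. y v * y j)"
proof -
  let ?N = "nbrs n G v - C"
  have "?N \<subseteq> {..<n} - {v}"
    using G unfolding sgraph_def nbrs_def by auto
  then obtain \<pi> where \<pi>: "bij_betw \<pi> {..<n} {..<n}" "\<pi> v = n - 1" "\<pi> ` ?N \<subseteq> {..<\<delta> - 1}"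
    using exists_bij_pendant[OF v _ C(2)] \<delta> by (metis diff_le_mono less_imp_le_nat)
  let ?H = "relabel \<pi> (H_graph n \<delta>)"
  define R where "R = {v} \<times> C \<union> C \<times> {v}"
  have vC: "v \<notin> C"
    using C(1) G unfolding nbrs_def sgraph_def by auto
  have Cn: "C \<subseteq> {..<n}"
    using C(1) unfolding nbrs_def by auto
  have "finite C"
    using C(1) finite_nbrs by (rule finite_subset)
  have cover: "?H i j \<or> (i, j) \<in> R" if "i < n" "j < n" "G i j" for i j
  proof (cases "(i, j) \<in> R")
    case False
    have "i \<noteq> j" "G j i"
      using G that unfolding sgraph_def by blast+
    with False that show ?thesis
      by (intro disjI1 relabel_H_graph_edge[OF \<pi>(1) v \<pi>(2,3)]) (auto simp: R_def nbrs_def)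
  qed simp
  have missing: "missing_pairs n G v \<subseteq> {(i, j). i < n \<and> j < n \<and> ?H i j \<and> \<not> G i j}"
    by (auto simp: missing_pairs_def intro!: relabel_H_graph_edge[OF \<pi>(1) v \<pi>(2,3)])
  have "quad_form n G y + (\<Sum>(i, j)\<in>missing_pairs n G v. y i * y j)
      \<le> quad_form n ?H y + (\<Sum>(i, j)\<in>R. y i * y j)"
    using nonneg missing _ cover by (rule quad_form_exchange) (use v Cn in \<open>auto simp: R_def\<close>)
  moreover have "quad_form n ?H y \<le> quad_form n G y"
  proof -
    have "quad_form n ?H y \<le> spec_rad n (H_graph n \<delta>) * sq_norm n y"
      using n by (intro quad_form_relabel_H_graph_le[OF \<delta> _ \<pi>(1)]) simp
    also have "\<dots> \<le> \<rho> * sq_norm n y"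
      using \<rho> sq_norm_pos[OF nonzero] by (intro mult_right_mono) auto
    also have "\<dots> \<le> quad_form n G y"
      by (rule quad_form_ge)
    finally show ?thesis .
  qed
  moreover have "(\<Sum>(i, j)\<in>R. y i * y j) = 2 * (\<Sum>j\<in>C. y v * y j)"
  proof -
    have "{v} \<times> C = (\<lambda>j. (v, j)) ` C" "C \<times> {v} = (\<lambda>j. (j, v)) ` C"
      by auto
    moreover have "({v} \<times> C) \<inter> (C \<times> {v}) = {}"
      using vC by auto
    ultimately show ?thesis
      unfolding R_def using \<open>finite C\<close>
      by (simp add: sum.union_disjoint sum.reindex inj_on_def mult.commute)
  qed
  ultimately show ?thesis
    by linarith
qed

lemma missing_pairs_weight_ge:
  assumes v: "v < n" and d: "5 * degree n G v \<le> n - 2"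
  shows "real (card (missing_pairs n G v)) * (4 * level / 5)\<^sup>2 \<le> (\<Sum>(i, j)\<in>missing_pairs n G v. y i * y j)"
proof -
  have "(4 * level / 5)\<^sup>2 \<le> y i * y j" if "(i, j) \<in> missing_pairs n G v" for i j
  proof -
    have "4 * level / 5 \<le> y i" "4 * level / 5 \<le> y j"
      using that pair_ge_level[of _ v] low_degree_entry_le[OF v d] v
      unfolding missing_pairs_def by fastforce+
    then show ?thesis
      unfolding power2_eq_square using level_pos by (intro mult_mono) auto
  qed
  then show ?thesis
    using sum_mono[of "missing_pairs n G v" "\<lambda>_. (4 * level / 5)\<^sup>2" "\<lambda>(i, j). y i * y j"] by force
qed

lemma star_weight_le:
  assumes v: "v < n" and d: "5 * degree n G v \<le> n - 2" and C: "C \<subseteq> {..<n}"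
  shows "(\<Sum>j\<in>C. y v * y j) \<le> real (card C) * (level / 5 * level)"
proof -
  have "(\<Sum>j\<in>C. y v * y j) \<le> (\<Sum>j\<in>C. level / 5 * level)"
    using C low_degree_entry_le[OF v d] le_level nonneg level_pos
    by (intro sum_mono mult_mono) auto
  then show ?thesis
    by simp
qed

text \<open>For \<open>|C| = d - \<delta> + 1\<close> the two weight estimates give \<open>16 |M| \<le> 10 |C|\<close>, and since \<open>|M|\<close> is
  an integer this forces \<open>|M| \<le> 2 (d - \<delta>)\<close>.\<close>

lemma card_missing_pairs_le:
  assumes \<delta>: "1 \<le> \<delta>" "\<delta> < n" and \<rho>: "spec_rad n (H_graph n \<delta>) \<le> \<rho>"
    and v: "v < n" and d: "\<delta> \<le> degree n G v" "5 * degree n G v \<le> n - 2"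
  shows "card (missing_pairs n G v) \<le> 2 * (degree n G v - \<delta>)"
proof -
  define e where "e = degree n G v - \<delta>"
  let ?M = "missing_pairs n G v"
  have "e + 1 \<le> card (nbrs n G v)"
    using d \<delta> by (simp add: card_nbrs e_def)
  then obtain C where C: "C \<subseteq> nbrs n G v" "card C = e + 1"
    by (rule obtain_subset_with_card_n)
  have "card (nbrs n G v - C) \<le> \<delta> - 1"
    using C d \<delta> by (simp add: card_Diff_subset card_nbrs finite_subset[OF C(1)] e_def)
  have "C \<subseteq> {..<n}"
    using C(1) unfolding nbrs_def by auto
  have "real (card ?M) * (16 * level\<^sup>2) \<le> 25 * (\<Sum>(i, j)\<in>?M. y i * y j)"
    using missing_pairs_weight_ge[OF v d(2)] by (simp add: power2_eq_square)
  also have "\<dots> \<le> 50 * (\<Sum>j\<in>C. y v * y j)"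
    using missing_pairs_weight_le[OF \<delta> \<rho> v C(1) \<open>card (nbrs n G v - C) \<le> \<delta> - 1\<close>] by simp
  also have "\<dots> \<le> real (card C) * (10 * level\<^sup>2)"
    using star_weight_le[OF v d(2) \<open>C \<subseteq> {..<n}\<close>] by (simp add: power2_eq_square ac_simps)
  finally have "(real (card ?M) * 16) * level\<^sup>2 \<le> (real (card C) * 10) * level\<^sup>2"
    by (simp only: mult.assoc)
  then have "real (card ?M * 16) \<le> real ((e + 1) * 10)"
    using level_pos C(2) by (simp add: mult_le_cancel_right)
  then have "card ?M * 16 \<le> (e + 1) * 10"
    by (simp only: of_nat_le_iff)
  then have "card ?M < 2 * e + 1"
    by (rule contrapos_pp) (simp add: not_less algebra_simps)
  then show ?thesis
    unfolding e_def[symmetric] by linarith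
qed

end

section \<open>Packing \<open>F\<close> into a nearly complete graph\<close>

definition conflicts :: "nat \<Rightarrow> (nat \<Rightarrow> nat \<Rightarrow> bool) \<Rightarrow> (nat \<Rightarrow> nat \<Rightarrow> bool) \<Rightarrow> (nat \<Rightarrow> nat) \<Rightarrow> (nat \<times> nat) set"
  where "conflicts n F G \<sigma> = {(i, j). i < n \<and> j < n \<and> F i j \<and> \<not> G (\<sigma> i) (\<sigma> j)}"

lemma finite_conflicts [simp]: "finite (conflicts n F G \<sigma>)"
  by (rule finite_subset[of _ "{..<n} \<times> {..<n}"]) (auto simp: conflicts_def)

lemma swap_reduces_conflicts:
  assumes F: "sgraph n F" and G: "sgraph n G"
    and xw: "x \<noteq> w" "\<not> F x w"
    and A: "\<And>z. z < n \<Longrightarrow> F x z \<Longrightarrow> z \<noteq> w \<Longrightarrow> G (\<sigma> w) (\<sigma> z)"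
    and B: "\<And>z. z < n \<Longrightarrow> F w z \<Longrightarrow> z \<noteq> x \<Longrightarrow> G (\<sigma> x) (\<sigma> z)"
  shows "conflicts n F G (\<sigma> \<circ> transpose x w) \<subseteq> conflicts n F G \<sigma>"
    and "(x, j) \<notin> conflicts n F G (\<sigma> \<circ> transpose x w)"
proof -
  let ?\<tau> = "\<sigma> \<circ> transpose x w"
  have Fs: "F a b \<Longrightarrow> F b a" and Gs: "G a b \<Longrightarrow> G b a" and Fi: "\<not> F a a" for a b
    using F G unfolding sgraph_def by blast+
  have at_x: "G (?\<tau> x) (?\<tau> j)" if "j < n" "F x j" for j
  proof -
    have "j \<noteq> x" "j \<noteq> w"
      using that Fi xw by auto
    then show ?thesis
      using A that by simp
  qed
  have at_w: "G (?\<tau> w) (?\<tau> j)" if "j < n" "F w j" for j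
  proof -
    have "j \<noteq> w" "j \<noteq> x"
      using that Fi Fs xw by auto
    then show ?thesis
      using B that by simp
  qed
  show "(x, j) \<notin> conflicts n F G ?\<tau>"
    using at_x unfolding conflicts_def by auto
  show "conflicts n F G ?\<tau> \<subseteq> conflicts n F G \<sigma>"
  proof
    fix p assume "p \<in> conflicts n F G ?\<tau>"
    then obtain i j where ij: "p = (i, j)" "i < n" "j < n" "F i j" "\<not> G (?\<tau> i) (?\<tau> j)"
      unfolding conflicts_def by auto
    have "i \<noteq> x" "i \<noteq> w"
      using at_x at_w ij by blast+
    moreover have "j \<noteq> x" "j \<noteq> w"
      using at_x[of i] at_w[of i] ij Fs Gs by blast+
    ultimately show "p \<in> conflicts n F G \<sigma>"
      using ij unfolding conflicts_def by simp
  qed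
qed

lemma card_preimage_le:
  assumes "bij_betw \<sigma> {..<n} {..<n}" "finite A"
  shows "card {w. w < n \<and> \<sigma> w \<in> A} \<le> card A"
proof -
  have "inj_on \<sigma> {w. w < n \<and> \<sigma> w \<in> A}"
    using assms(1) unfolding bij_betw_def by (rule inj_on_subset[OF conjunct1]) auto
  then have "card {w. w < n \<and> \<sigma> w \<in> A} = card (\<sigma> ` {w. w < n \<and> \<sigma> w \<in> A})"
    by (simp add: card_image)
  also have "\<dots> \<le> card A"
    using assms(2) by (intro card_mono) auto
  finally show ?thesis .
qed

lemma card_misses_nbr_images_le:
  assumes G: "sgraph n G" and \<sigma>: "bij_betw \<sigma> {..<n} {..<n}"
  shows "card {w. w < n \<and> (\<exists>z<n. F x z \<and> z \<noteq> w \<and> \<not> G (\<sigma> w) (\<sigma> z))}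
    \<le> (\<Sum>z\<in>nbrs n F x. non_degree n G (\<sigma> z))"
proof -
  have \<sigma>n: "i < n \<Longrightarrow> \<sigma> i < n" for i
    using \<sigma> by (auto simp: bij_betw_def)
  have \<sigma>inj: "i < n \<Longrightarrow> j < n \<Longrightarrow> \<sigma> i = \<sigma> j \<Longrightarrow> i = j" for i j
    using \<sigma> unfolding bij_betw_def inj_on_def by blast
  have "{w. w < n \<and> (\<exists>z<n. F x z \<and> z \<noteq> w \<and> \<not> G (\<sigma> w) (\<sigma> z))}
      \<subseteq> (\<Union>z\<in>nbrs n F x. {w. w < n \<and> \<sigma> w \<in> non_nbrs n G (\<sigma> z)})"
    using G \<sigma>n \<sigma>inj unfolding nbrs_def non_nbrs_def sgraph_def by blast
  then have "card {w. w < n \<and> (\<exists>z<n. F x z \<and> z \<noteq> w \<and> \<not> G (\<sigma> w) (\<sigma> z))}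
      \<le> card (\<Union>z\<in>nbrs n F x. {w. w < n \<and> \<sigma> w \<in> non_nbrs n G (\<sigma> z)})"
    by (intro card_mono) auto
  also have "\<dots> \<le> (\<Sum>z\<in>nbrs n F x. card {w. w < n \<and> \<sigma> w \<in> non_nbrs n G (\<sigma> z)})"
    by (rule card_UN_le) simp
  also have "\<dots> \<le> (\<Sum>z\<in>nbrs n F x. non_degree n G (\<sigma> z))"
    unfolding non_degree_def using card_preimage_le[OF \<sigma>] by (intro sum_mono) simp
  finally show ?thesis .
qed

lemma card_has_nbr_image_missed_le:
  assumes \<sigma>: "bij_betw \<sigma> {..<n} {..<n}" and x: "x < n"
    and F: "sgraph n F" and D: "\<And>i. i < n \<Longrightarrow> degree n F i \<le> D"
  shows "card {w. w < n \<and> (\<exists>z<n. F w z \<and> z \<noteq> x \<and> \<not> G (\<sigma> x) (\<sigma> z))} \<le> D * non_degree n G (\<sigma> x)"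
proof -
  define Z where "Z = {z. z < n \<and> \<sigma> z \<in> non_nbrs n G (\<sigma> x)}"
  have \<sigma>n: "i < n \<Longrightarrow> \<sigma> i < n" for i
    using \<sigma> by (auto simp: bij_betw_def)
  have \<sigma>inj: "i < n \<Longrightarrow> j < n \<Longrightarrow> \<sigma> i = \<sigma> j \<Longrightarrow> i = j" for i j
    using \<sigma> unfolding bij_betw_def inj_on_def by blast
  have "{w. w < n \<and> (\<exists>z<n. F w z \<and> z \<noteq> x \<and> \<not> G (\<sigma> x) (\<sigma> z))} \<subseteq> (\<Union>z\<in>Z. nbrs n F z)"
    using F \<sigma>n \<sigma>inj x unfolding Z_def nbrs_def non_nbrs_def sgraph_def by blast
  then have "card {w. w < n \<and> (\<exists>z<n. F w z \<and> z \<noteq> x \<and> \<not> G (\<sigma> x) (\<sigma> z))} \<le> card (\<Union>z\<in>Z. nbrs n F z)"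
    by (intro card_mono) (auto simp: Z_def)
  also have "\<dots> \<le> (\<Sum>z\<in>Z. card (nbrs n F z))"
    by (rule card_UN_le) (simp add: Z_def)
  also have "\<dots> \<le> (\<Sum>z\<in>Z. D)"
    using D unfolding card_nbrs Z_def by (intro sum_mono) auto
  also have "\<dots> \<le> D * non_degree n G (\<sigma> x)"
    using card_preimage_le[OF \<sigma> finite_non_nbrs] unfolding Z_def non_degree_def by simp
  finally show ?thesis .
qed

lemma exists_swap_partner:
  assumes F: "sgraph n F" and G: "sgraph n G" and \<sigma>: "bij_betw \<sigma> {..<n} {..<n}" and x: "x < n"
    and D: "\<And>i. i < n \<Longrightarrow> degree n F i \<le> D" and P: "finite P"
    and budget: "(\<Sum>z\<in>nbrs n F x. non_degree n G (\<sigma> z)) + D * non_degree n G (\<sigma> x) + card P + D + 1 < n"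
  obtains w where "w < n" "w \<notin> P" "w \<noteq> x" "\<not> F x w"
    "\<And>z. z < n \<Longrightarrow> F x z \<Longrightarrow> z \<noteq> w \<Longrightarrow> G (\<sigma> w) (\<sigma> z)"
    "\<And>z. z < n \<Longrightarrow> F w z \<Longrightarrow> z \<noteq> x \<Longrightarrow> G (\<sigma> x) (\<sigma> z)"
proof -
  define A where "A = {w. w < n \<and> (\<exists>z<n. F x z \<and> z \<noteq> w \<and> \<not> G (\<sigma> w) (\<sigma> z))}"
  define B where "B = {w. w < n \<and> (\<exists>z<n. F w z \<and> z \<noteq> x \<and> \<not> G (\<sigma> x) (\<sigma> z))}"
  define X where "X = P \<union> insert x (nbrs n F x)"
  have "card X \<le> card P + (D + 1)"
  proof -
    have "card X \<le> card P + card (insert x (nbrs n F x))"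
      unfolding X_def by (rule card_Un_le)
    also have "card (insert x (nbrs n F x)) \<le> D + 1"
      using card_insert_le_m1[of "D + 1" "nbrs n F x"] D[OF x] by (simp add: card_nbrs)
    finally show ?thesis by simp
  qed
  then have "card (A \<union> B \<union> X) < n"
    using card_misses_nbr_images_le[OF G \<sigma>, of F x] card_has_nbr_image_missed_le[OF \<sigma> x F D, of G]
      card_Un_le[of "A \<union> B" X] card_Un_le[of A B] budget
    unfolding A_def B_def by linarith
  then have "\<not> {..<n} \<subseteq> A \<union> B \<union> X"
    using card_mono[of "A \<union> B \<union> X" "{..<n}"] P unfolding A_def B_def X_def by fastforce
  then obtain w where "w < n" "w \<notin> A" "w \<notin> B" "w \<notin> X"
    by auto
  then show ?thesis
    by (intro that) (auto simp: A_def B_def X_def nbrs_def)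
qed

lemma extend_inj_to_bij:
  fixes n :: nat
  assumes P: "P \<subseteq> {..<n}" and inj: "inj_on \<sigma>\<^sub>0 P" and img: "\<sigma>\<^sub>0 ` P \<subseteq> {..<n}"
  obtains \<sigma> where "bij_betw \<sigma> {..<n} {..<n}" "\<And>i. i \<in> P \<Longrightarrow> \<sigma> i = \<sigma>\<^sub>0 i"
proof -
  define R where "R = {..<n} - P"
  define R' where "R' = {..<n} - \<sigma>\<^sub>0 ` P"
  have "finite P"
    by (rule finite_subset[OF P]) simp
  then have "card R = card R'"
    unfolding R_def R'_def using P img card_image[OF inj] by (simp add: card_Diff_subset)
  then obtain g where g: "bij_betw g R R'"
    using finite_same_card_bij[of R R'] unfolding R_def R'_def by auto
  define \<sigma> where "\<sigma> i = (if i \<in> P then \<sigma>\<^sub>0 i else g i)" for i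
  have "bij_betw \<sigma> P (\<sigma>\<^sub>0 ` P)"
    unfolding \<sigma>_def using inj by (subst bij_betw_cong[where g = \<sigma>\<^sub>0]) (auto simp: bij_betw_def)
  moreover have "bij_betw \<sigma> R R'"
    unfolding \<sigma>_def using g by (subst bij_betw_cong[where g = g]) (auto simp: R_def)
  ultimately have "bij_betw \<sigma> (P \<union> R) (\<sigma>\<^sub>0 ` P \<union> R')"
    by (rule bij_betw_combine) (auto simp: R_def R'_def)
  moreover have "P \<union> R = {..<n}" "\<sigma>\<^sub>0 ` P \<union> R' = {..<n}"
    using P img unfolding R_def R'_def by auto
  ultimately have "bij_betw \<sigma> {..<n} {..<n}"
    by simp
  then show ?thesis
    by (rule that) (simp add: \<sigma>_def)
qed

lemma exists_fewer_conflicts: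
  assumes F: "sgraph n F" and G: "sgraph n G" and D: "\<And>i. i < n \<Longrightarrow> degree n F i \<le> D"
    and bij: "bij_betw \<sigma> {..<n} {..<n}" and P: "finite P"
    and embeds: "\<And>i j. i \<in> P \<Longrightarrow> j \<in> P \<Longrightarrow> F i j \<Longrightarrow> G (\<sigma> i) (\<sigma> j)"
    and budget: "\<And>x. x < n \<Longrightarrow> x \<notin> P \<Longrightarrow>
        (\<Sum>z\<in>nbrs n F x. non_degree n G (\<sigma> z)) + D * non_degree n G (\<sigma> x) + card P + D + 1 < n"
    and conflict: "conflicts n F G \<sigma> \<noteq> {}"
  obtains \<tau> where "bij_betw \<tau> {..<n} {..<n}" "\<And>i. i \<in> P \<Longrightarrow> \<tau> i = \<sigma> i"
    "card (conflicts n F G \<tau>) < card (conflicts n F G \<sigma>)"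
proof -
  have Fs: "F a b \<Longrightarrow> F b a" and Gs: "G a b \<Longrightarrow> G b a" for a b
    using F G unfolding sgraph_def by blast+
  obtain a b where ab: "(a, b) \<in> conflicts n F G \<sigma>"
    using conflict by auto
  then have "(b, a) \<in> conflicts n F G \<sigma>"
    unfolding conflicts_def using Fs Gs by blast
  moreover have "a \<notin> P \<or> b \<notin> P"
    using ab embeds unfolding conflicts_def by auto
  ultimately obtain x j where xj: "(x, j) \<in> conflicts n F G \<sigma>" "x \<notin> P"
    using ab by blast
  then have x: "x < n"
    unfolding conflicts_def by auto
  obtain w where w: "w < n" "w \<notin> P" "w \<noteq> x" "\<not> F x w"
    "\<And>z. z < n \<Longrightarrow> F x z \<Longrightarrow> z \<noteq> w \<Longrightarrow> G (\<sigma> w) (\<sigma> z)"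
    "\<And>z. z < n \<Longrightarrow> F w z \<Longrightarrow> z \<noteq> x \<Longrightarrow> G (\<sigma> x) (\<sigma> z)"
    using exists_swap_partner[OF F G bij x D P budget[OF x xj(2)]] by blast
  let ?\<tau> = "\<sigma> \<circ> transpose x w"
  note swap = swap_reduces_conflicts[OF F G w(3)[symmetric] w(4) w(5) w(6)]
  have "conflicts n F G ?\<tau> \<subset> conflicts n F G \<sigma>"
    using swap xj(1) by blast
  then have "card (conflicts n F G ?\<tau>) < card (conflicts n F G \<sigma>)"
    by (rule psubset_card_mono[OF finite_conflicts])
  moreover have "bij_betw (transpose x w) {..<n} {..<n}"
    using x w(1) by (intro bij_betwI[where g = "transpose x w"]) (auto simp: transpose_def)
  then have "bij_betw ?\<tau> {..<n} {..<n}"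
    using bij by (rule bij_betw_trans)
  moreover have "?\<tau> i = \<sigma> i" if "i \<in> P" for i
    using that w(2) xj(2) by (metis comp_apply transpose_apply_other)
  ultimately show ?thesis
    using that by blast
qed

text \<open>Among the bijections extending a partial embedding, one with fewest conflicts has none.\<close>

lemma exists_embedding_by_swaps:
  assumes F: "sgraph n F" and G: "sgraph n G" and D: "\<And>i. i < n \<Longrightarrow> degree n F i \<le> D"
    and P: "P \<subseteq> {..<n}" and inj: "inj_on \<sigma>\<^sub>0 P" and img: "\<sigma>\<^sub>0 ` P \<subseteq> {..<n}"
    and embeds: "\<And>i j. i \<in> P \<Longrightarrow> j \<in> P \<Longrightarrow> F i j \<Longrightarrow> G (\<sigma>\<^sub>0 i) (\<sigma>\<^sub>0 j)"
    and budget: "\<And>\<sigma> x. bij_betw \<sigma> {..<n} {..<n} \<Longrightarrow> (\<forall>i\<in>P. \<sigma> i = \<sigma>\<^sub>0 i) \<Longrightarrow> x < n \<Longrightarrow> x \<notin> P \<Longrightarrow>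
        (\<Sum>z\<in>nbrs n F x. non_degree n G (\<sigma> z)) + D * non_degree n G (\<sigma> x) + card P + D + 1 < n"
  obtains \<sigma> where "bij_betw \<sigma> {..<n} {..<n}" "\<And>i j. i < n \<Longrightarrow> j < n \<Longrightarrow> F i j \<Longrightarrow> G (\<sigma> i) (\<sigma> j)"
proof -
  define ext where "ext \<sigma> \<longleftrightarrow> bij_betw \<sigma> {..<n} {..<n} \<and> (\<forall>i\<in>P. \<sigma> i = \<sigma>\<^sub>0 i)" for \<sigma>
  obtain \<sigma>\<^sub>1 where "ext \<sigma>\<^sub>1"
    using extend_inj_to_bij[OF P inj img] unfolding ext_def by metis
  then obtain \<sigma> where \<sigma>: "ext \<sigma>"
    and min: "\<And>\<tau>. ext \<tau> \<Longrightarrow> card (conflicts n F G \<sigma>) \<le> card (conflicts n F G \<tau>)"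
    using ex_has_least_nat[of ext \<sigma>\<^sub>1 "\<lambda>\<sigma>. card (conflicts n F G \<sigma>)"] by blast
  have bij: "bij_betw \<sigma> {..<n} {..<n}" and on_P: "\<forall>i\<in>P. \<sigma> i = \<sigma>\<^sub>0 i"
    using \<sigma> unfolding ext_def by auto
  have "conflicts n F G \<sigma> = {}"
  proof (rule ccontr)
    assume "conflicts n F G \<sigma> \<noteq> {}"
    moreover have "finite P"
      using P finite_subset by blast
    ultimately obtain \<tau> where "bij_betw \<tau> {..<n} {..<n}" "\<And>i. i \<in> P \<Longrightarrow> \<tau> i = \<sigma> i"
      "card (conflicts n F G \<tau>) < card (conflicts n F G \<sigma>)"
      using exists_fewer_conflicts[OF F G D bij _ _ budget[OF bij on_P]] embeds on_P by metis
    then show False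
      using min[of \<tau>] on_P unfolding ext_def by auto
  qed
  then show ?thesis
    using that bij unfolding conflicts_def by blast
qed

lemma card_markov_le:
  fixes f :: "nat \<Rightarrow> nat"
  assumes "(\<Sum>v<n. f v) \<le> K * n" "n > 0"
  shows "card {v. v < n \<and> n \<le> c * f v} \<le> c * K"
proof -
  let ?Z = "{v. v < n \<and> n \<le> c * f v}"
  have "card ?Z * n = (\<Sum>v\<in>?Z. n)"
    by simp
  also have "\<dots> \<le> (\<Sum>v\<in>?Z. c * f v)"
    by (intro sum_mono) auto
  also have "\<dots> \<le> (\<Sum>v<n. c * f v)"
    by (intro sum_mono2) auto
  also have "\<dots> \<le> (c * K) * n"
    using assms(1) by (simp add: sum_distrib_left[symmetric])
  finally show ?thesis
    using assms(2) by simp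
qed

lemma sum_card_rows_le:
  assumes "finite M" "finite A"
  shows "(\<Sum>u\<in>A. card {w. (u, w) \<in> M}) \<le> card M"
proof -
  have fin: "\<forall>u\<in>A. finite {w. (u, w) \<in> M}"
  proof
    fix u
    have "{w. (u, w) \<in> M} \<subseteq> snd ` M"
      by force
    then show "finite {w. (u, w) \<in> M}"
      using assms(1) finite_subset by blast
  qed
  have "(\<Sum>u\<in>A. card {w. (u, w) \<in> M}) = card (Sigma A (\<lambda>u. {w. (u, w) \<in> M}))"
    using card_SigmaI[OF assms(2) fin] by simp
  also have "\<dots> \<le> card M"
    using assms(1) by (intro card_mono) auto
  finally show ?thesis .
qed

lemma non_degree_le_missing_row:
  assumes "u < n" "u \<noteq> v"
  shows "non_degree n G u \<le> card {w. (u, w) \<in> missing_pairs n G v} + (if G u v then 0 else 1)"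
proof -
  have fin: "finite {w. (u, w) \<in> missing_pairs n G v}"
    by (rule finite_subset[of _ "{..<n}"]) (auto simp: missing_pairs_def)
  have "non_nbrs n G u \<subseteq> (if G u v then {} else {v}) \<union> {w. (u, w) \<in> missing_pairs n G v}"
    using assms unfolding non_nbrs_def missing_pairs_def by auto
  then have "non_degree n G u \<le> card ((if G u v then {} else {v}) \<union> {w. (u, w) \<in> missing_pairs n G v})"
    unfolding non_degree_def using fin by (intro card_mono) auto
  also have "\<dots> \<le> card {w. (u, w) \<in> missing_pairs n G v} + (if G u v then 0 else 1)"
    using card_Un_le[of "if G u v then {} else {v}" "{w. (u, w) \<in> missing_pairs n G v}"] by auto
  finally show ?thesis .
qed

lemma non_degree_le_card_missing_pairs:
  assumes "u < n" "u \<noteq> v"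
  shows "non_degree n G u \<le> card (missing_pairs n G v) + 1"
  using non_degree_le_missing_row[OF assms, of G] sum_card_rows_le[OF finite_missing_pairs, of "{u}" n G v]
  by (simp split: if_splits)

lemma sum_non_degree_nbrs_le:
  assumes G: "sgraph n G" and C: "C \<subseteq> nbrs n G v"
  shows "(\<Sum>c\<in>C. non_degree n G c) \<le> card (missing_pairs n G v)"
proof -
  have "finite C"
    using C finite_nbrs by (rule finite_subset)
  have "non_degree n G c \<le> card {w. (c, w) \<in> missing_pairs n G v}" if "c \<in> C" for c
  proof -
    have "c < n" "c \<noteq> v" "G c v"
      using that C G unfolding nbrs_def sgraph_def by auto
    then show ?thesis
      using non_degree_le_missing_row[of c n v G] by simp
  qed
  then have "(\<Sum>c\<in>C. non_degree n G c) \<le> (\<Sum>c\<in>C. card {w. (c, w) \<in> missing_pairs n G v})"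
    by (rule sum_mono)
  also have "\<dots> \<le> card (missing_pairs n G v)"
    by (rule sum_card_rows_le[OF finite_missing_pairs \<open>finite C\<close>])
  finally show ?thesis .
qed

definition non_adjacent_pairs :: "(nat \<Rightarrow> nat \<Rightarrow> bool) \<Rightarrow> nat set \<Rightarrow> (nat \<times> nat) set" where
  "non_adjacent_pairs G A = {(a, b). a \<in> A \<and> b \<in> A \<and> a \<noteq> b \<and> \<not> G a b}"

lemma finite_non_adjacent_pairs: "finite A \<Longrightarrow> finite (non_adjacent_pairs G A)"
  by (rule finite_subset[of _ "A \<times> A"]) (auto simp: non_adjacent_pairs_def)

lemma card_non_adjacent_pairs_remove:
  assumes "finite A" "a \<in> A" "b \<in> A" "a \<noteq> b" "\<not> G a b" "\<not> G b a"
  shows "card (non_adjacent_pairs G (A - {a})) + 2 \<le> card (non_adjacent_pairs G A)"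
proof -
  let ?P = "non_adjacent_pairs G A"
  have sub: "non_adjacent_pairs G (A - {a}) \<subseteq> ?P - {(a, b), (b, a)}" and ab: "{(a, b), (b, a)} \<subseteq> ?P"
    using assms unfolding non_adjacent_pairs_def by auto
  have fin: "finite ?P"
    using assms(1) by (rule finite_non_adjacent_pairs)
  have "card (non_adjacent_pairs G (A - {a})) \<le> card (?P - {(a, b), (b, a)})"
    using fin sub by (intro card_mono) auto
  also have "\<dots> = card ?P - 2"
    using card_Diff_subset[OF _ ab] assms(4) by simp
  moreover have "2 \<le> card ?P"
    using card_mono[OF fin ab] assms(4) by simp
  ultimately show ?thesis
    by linarith
qed

lemma exists_clique_of_few_non_adjacent:
  assumes "finite A" "m \<le> card A" and sym: "\<And>a b. \<not> G a b \<Longrightarrow> \<not> G b a"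
    and "card (non_adjacent_pairs G A) \<le> 2 * (card A - m)"
  obtains C where "C \<subseteq> A" "card C = m" "\<And>a b. a \<in> C \<Longrightarrow> b \<in> C \<Longrightarrow> a \<noteq> b \<Longrightarrow> G a b"
  using assms(1,2,4)
proof (induction "card A - m" arbitrary: A)
  case 0
  then have "non_adjacent_pairs G A = {}"
    using finite_non_adjacent_pairs[of A G] by simp
  then show ?case
    using 0 by (intro "0.prems"(1)[of A]) (auto simp: non_adjacent_pairs_def)
next
  case (Suc k)
  show ?case
  proof (cases "non_adjacent_pairs G A = {}")
    case True
    obtain C where "C \<subseteq> A" "card C = m"
      using obtain_subset_with_card_n[OF Suc.prems(3)] by blast
    then show ?thesis
      using True by (intro Suc.prems(1)[of C]) (auto simp: non_adjacent_pairs_def)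
  next
    case False
    then obtain a b where ab: "a \<in> A" "b \<in> A" "a \<noteq> b" "\<not> G a b"
      unfolding non_adjacent_pairs_def by auto
    have card_A: "card (A - {a}) = card A - 1"
      using ab Suc.prems(2) by simp
    show ?thesis
    proof (rule Suc.hyps(1)[of "A - {a}"])
      show "k = card (A - {a}) - m" "m \<le> card (A - {a})" "finite (A - {a})"
        using Suc.hyps(2) Suc.prems(2) card_A by simp_all
      show "card (non_adjacent_pairs G (A - {a})) \<le> 2 * (card (A - {a}) - m)"
        using card_non_adjacent_pairs_remove[OF Suc.prems(2) ab sym[OF ab(4)]] Suc.prems(4) Suc.hyps(2) card_A
        by simp
      fix C assume "C \<subseteq> A - {a}" "card C = m" "\<And>a b. a \<in> C \<Longrightarrow> b \<in> C \<Longrightarrow> a \<noteq> b \<Longrightarrow> G a b"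
      then show thesis
        by (intro Suc.prems(1)[of C]) auto
    qed
  qed
qed

text \<open>The greedy phase places the images of heavy vertices one by one; the \<open>load\<close> of an
  unplaced vertex \<open>v\<close> is the non-degree already committed among the images of its placed
  \<open>F\<close>-neighbours.\<close>

locale greedy_frame =
  fixes n :: nat and F G :: "nat \<Rightarrow> nat \<Rightarrow> bool" and D :: nat
  assumes F: "sgraph n F" and G: "sgraph n G" and D: "\<And>i. i < n \<Longrightarrow> degree n F i \<le> D"
    and non_degree_sum: "(\<Sum>u<n. non_degree n G u) \<le> 3 * n" and n: "n > 0"
begin

definition load :: "(nat \<Rightarrow> nat) \<Rightarrow> nat set \<Rightarrow> nat \<Rightarrow> nat" where
  "load \<sigma> P v = (\<Sum>z\<in>nbrs n F v \<inter> P. non_degree n G (\<sigma> z))"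

definition partial_embedding :: "(nat \<Rightarrow> nat) \<Rightarrow> nat set \<Rightarrow> bool" where
  "partial_embedding \<sigma> P \<longleftrightarrow> P \<subseteq> {..<n} \<and> inj_on \<sigma> P \<and> \<sigma> ` P \<subseteq> {..<n} \<and>
     (\<forall>i\<in>P. \<forall>j\<in>P. F i j \<longrightarrow> G (\<sigma> i) (\<sigma> j))"

definition light :: "(nat \<Rightarrow> nat) \<Rightarrow> nat set \<Rightarrow> bool" where
  "light \<sigma> P \<longleftrightarrow> (\<forall>v<n. v \<notin> P \<longrightarrow> 10 * load \<sigma> P v \<le> 9 * n)"

lemma card_UN_nbrs_le: "finite A \<Longrightarrow> card (\<Union>z\<in>A. nbrs n F z) \<le> card A * D"
proof -
  assume "finite A"
  have "card (nbrs n F z) \<le> D" for z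
  proof (cases "z < n")
    case False
    then have "nbrs n F z = {}"
      using F unfolding sgraph_def nbrs_def by blast
    then show ?thesis by simp
  qed (simp add: D card_nbrs)
  then show ?thesis
    using card_UN_le[OF \<open>finite A\<close>, of "nbrs n F"] sum_mono[of A "\<lambda>z. card (nbrs n F z)" "\<lambda>_. D"]
    by simp
qed

lemma sum_load_le:
  assumes "partial_embedding \<sigma> P"
  shows "(\<Sum>v<n. load \<sigma> P v) \<le> (3 * D) * n"
proof -
  have P: "P \<subseteq> {..<n}" and inj: "inj_on \<sigma> P" and img: "\<sigma> ` P \<subseteq> {..<n}"
    using assms unfolding partial_embedding_def by auto
  have "finite P"
    by (rule finite_subset[OF P]) simp
  have "load \<sigma> P v = (\<Sum>z\<in>P. if F v z then non_degree n G (\<sigma> z) else 0)" for v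
  proof -
    have "nbrs n F v \<inter> P = P \<inter> {z. F v z}"
      using P by (auto simp: nbrs_def)
    then show ?thesis
      unfolding load_def using sum.inter_restrict[OF \<open>finite P\<close>, of _ "{z. F v z}"] by simp
  qed
  then have "(\<Sum>v<n. load \<sigma> P v) = (\<Sum>v<n. \<Sum>z\<in>P. if F v z then non_degree n G (\<sigma> z) else 0)"
    by simp
  also have "\<dots> = (\<Sum>z\<in>P. \<Sum>v<n. if F v z then non_degree n G (\<sigma> z) else 0)"
    by (rule sum.swap)
  also have "\<dots> = (\<Sum>z\<in>P. degree n F z * non_degree n G (\<sigma> z))"
  proof (intro sum.cong refl)
    fix z
    have "{v. v < n \<and> F v z} = {j. j < n \<and> F z j}"
      using F unfolding sgraph_def by blast
    then show "(\<Sum>v<n. if F v z then non_degree n G (\<sigma> z) else 0) = degree n F z * non_degree n G (\<sigma> z)"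
      by (simp add: sum.If_cases degree_def Int_def)
  qed
  also have "\<dots> \<le> (\<Sum>z\<in>P. D * non_degree n G (\<sigma> z))"
    using D P by (intro sum_mono mult_right_mono) auto
  also have "\<dots> = D * (\<Sum>u\<in>\<sigma> ` P. non_degree n G u)"
    by (simp add: sum_distrib_left sum.reindex[OF inj])
  also have "\<dots> \<le> D * (\<Sum>u<n. non_degree n G u)"
    using img by (intro mult_left_mono sum_mono2) auto
  also have "\<dots> \<le> (3 * D) * n"
    using non_degree_sum by simp
  finally show ?thesis .
qed

lemma load_insert:
  assumes "x \<notin> P" "x < n"
  shows "load (\<sigma>(x := h)) (insert x P) v = (if F v x then non_degree n G h else 0) + load \<sigma> P v"
proof -
  have "load (\<sigma>(x := h)) P v = load \<sigma> P v"
    unfolding load_def using assms(1) by (intro sum.cong) auto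
  moreover have "nbrs n F v \<inter> insert x P = (if F v x then insert x (nbrs n F v \<inter> P) else nbrs n F v \<inter> P)"
    using assms(2) by (auto simp: nbrs_def)
  ultimately show ?thesis
    using assms(1) unfolding load_def by simp
qed

text \<open>By Markov's inequality at most \<open>30 D\<close> vertices have load at least \<open>n/10\<close>, so together with
  \<open>P\<close> and the \<open>F\<close>-neighbourhoods of all these vertices fewer than \<open>n\<close> vertices are excluded.\<close>

lemma exists_free_vertex:
  assumes emb: "partial_embedding \<sigma> P" and count: "card P * (D + 1) + 30 * D * D < n"
  obtains x where "x < n" "x \<notin> P" "\<And>z. z \<in> P \<Longrightarrow> \<not> F x z"
    "\<And>v. v < n \<Longrightarrow> F v x \<Longrightarrow> 10 * load \<sigma> P v < n"
proof -
  have "finite P"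
    using emb finite_subset unfolding partial_embedding_def by blast
  define Z where "Z = {v. v < n \<and> n \<le> 10 * load \<sigma> P v}"
  have "card Z \<le> 10 * (3 * D)"
    unfolding Z_def using sum_load_le[OF emb] n by (rule card_markov_le)
  define X where "X = P \<union> (\<Union>z\<in>P. nbrs n F z) \<union> (\<Union>v\<in>Z. nbrs n F v)"
  have "card X \<le> card P + card P * D + card Z * D"
    using card_Un_le[of "P \<union> (\<Union>z\<in>P. nbrs n F z)" "\<Union>v\<in>Z. nbrs n F v"]
      card_Un_le[of P "\<Union>z\<in>P. nbrs n F z"] card_UN_nbrs_le[OF \<open>finite P\<close>]
      card_UN_nbrs_le[of Z] unfolding X_def Z_def by fastforce
  moreover have "card Z * D \<le> 30 * D * D"
    using \<open>card Z \<le> 10 * (3 * D)\<close> by (simp add: mult_right_mono)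
  moreover have "card P + card P * D + 30 * D * D < n"
    using count by (simp add: algebra_simps)
  ultimately have "card X < n"
    by linarith
  then have "\<not> {..<n} \<subseteq> X"
    using card_mono[of X "{..<n}"] \<open>finite P\<close> unfolding X_def Z_def by fastforce
  then obtain x where x: "x < n" "x \<notin> X"
    by auto
  have Fs: "F a b \<Longrightarrow> F b a" for a b
    using F unfolding sgraph_def by blast
  show ?thesis
  proof (rule that[OF x(1)])
    show "x \<notin> P" "\<And>z. z \<in> P \<Longrightarrow> \<not> F x z"
      using x Fs unfolding X_def nbrs_def by blast+
    show "10 * load \<sigma> P v < n" if "v < n" "F v x" for v
    proof (rule ccontr)
      assume "\<not> 10 * load \<sigma> P v < n"
      then have "x \<in> (\<Union>v\<in>Z. nbrs n F v)"
        using that x(1) unfolding Z_def nbrs_def by auto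
      then show False
        using x(2) unfolding X_def by blast
    qed
  qed
qed

lemma greedy_step:
  assumes emb: "partial_embedding \<sigma> P" and light: "light \<sigma> P"
    and h: "h < n" "h \<notin> \<sigma> ` P" "10 * non_degree n G h \<le> 8 * n"
    and count: "card P * (D + 1) + 30 * D * D < n"
  obtains x where "x < n" "x \<notin> P" "partial_embedding (\<sigma>(x := h)) (insert x P)" "light (\<sigma>(x := h)) (insert x P)"
proof -
  obtain x where x: "x < n" "x \<notin> P" "\<And>z. z \<in> P \<Longrightarrow> \<not> F x z"
    and low: "\<And>v. v < n \<Longrightarrow> F v x \<Longrightarrow> 10 * load \<sigma> P v < n"
    using exists_free_vertex[OF emb count] by blast
  have Fs: "F a b \<Longrightarrow> F b a" and Fi: "\<not> F a a" for a b
    using F unfolding sgraph_def by blast+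
  show ?thesis
  proof (rule that[OF x(1,2)])
    show "partial_embedding (\<sigma>(x := h)) (insert x P)"
      using emb x h Fs Fi unfolding partial_embedding_def by (auto simp: inj_on_def)
    have "10 * load (\<sigma>(x := h)) (insert x P) v \<le> 9 * n" if "v < n" "v \<notin> insert x P" for v
      using light low[OF that(1)] h(3) that unfolding load_insert[OF x(2,1)] light_def by auto
    then show "light (\<sigma>(x := h)) (insert x P)"
      unfolding light_def by blast
  qed
qed

lemma greedy_insert:
  assumes emb: "partial_embedding \<sigma> P" and light: "light \<sigma> P"
    and count: "card P * (D + 1) + 30 * D * D < n"
    and h: "h < n" "h \<notin> \<sigma> ` P \<Longrightarrow> 10 * non_degree n G h \<le> 8 * n"
  obtains \<sigma>' P' where "card P' \<le> card P + 1" "partial_embedding \<sigma>' P'" "light \<sigma>' P'"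
    "insert h (\<sigma> ` P) \<subseteq> \<sigma>' ` P'"
proof (cases "h \<in> \<sigma> ` P")
  case True
  then show ?thesis
    using that[of P \<sigma>] emb light by auto
next
  case False
  then obtain x where x: "x < n" "x \<notin> P" "partial_embedding (\<sigma>(x := h)) (insert x P)"
    "light (\<sigma>(x := h)) (insert x P)"
    using greedy_step[OF emb light h(1) False h(2)[OF False] count] by blast
  have "finite P"
    using emb finite_subset unfolding partial_embedding_def by blast
  then show ?thesis
    using that[of "insert x P" "\<sigma>(x := h)"] x by (auto simp: card_insert_if)
qed

lemma greedy_placement:
  assumes B: "finite B" "B \<subseteq> {..<n}" and emb: "partial_embedding \<sigma>\<^sub>0 P\<^sub>0" and light: "light \<sigma>\<^sub>0 P\<^sub>0"
    and margin: "\<And>h. h \<in> B \<Longrightarrow> h \<notin> \<sigma>\<^sub>0 ` P\<^sub>0 \<Longrightarrow> 10 * non_degree n G h \<le> 8 * n"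
    and count: "(card P\<^sub>0 + card B) * (D + 1) + 30 * D * D < n"
  obtains \<sigma> P where "card P \<le> card P\<^sub>0 + card B" "partial_embedding \<sigma> P" "light \<sigma> P"
    "\<sigma>\<^sub>0 ` P\<^sub>0 \<union> B \<subseteq> \<sigma> ` P"
proof -
  have "\<exists>\<sigma> P. card P \<le> card P\<^sub>0 + card B \<and> partial_embedding \<sigma> P \<and> light \<sigma> P \<and> \<sigma>\<^sub>0 ` P\<^sub>0 \<union> B \<subseteq> \<sigma> ` P"
    using B margin count
  proof (induction B rule: finite_induct)
    case empty
    show ?case
      using emb light by (intro exI[of _ \<sigma>\<^sub>0] exI[of _ P\<^sub>0]) simp
  next
    case (insert h B)
    have "(card P\<^sub>0 + card B) * (D + 1) \<le> (card P\<^sub>0 + card (insert h B)) * (D + 1)"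
      using insert.hyps by (intro mult_right_mono) simp_all
    then have "(card P\<^sub>0 + card B) * (D + 1) + 30 * D * D < n"
      using insert.prems(3) by linarith
    then obtain \<sigma> P where IH: "card P \<le> card P\<^sub>0 + card B" "partial_embedding \<sigma> P" "light \<sigma> P"
      "\<sigma>\<^sub>0 ` P\<^sub>0 \<union> B \<subseteq> \<sigma> ` P"
      using insert.IH insert.prems(1,2) by blast
    have "card P * (D + 1) \<le> (card P\<^sub>0 + card B) * (D + 1)"
      using IH(1) by (rule mult_right_mono) simp
    then have count': "card P * (D + 1) + 30 * D * D < n"
      using insert.hyps insert.prems(3) by (simp add: add_mult_distrib)
    have "h < n"
      using insert.prems(1) by simp
    moreover have "10 * non_degree n G h \<le> 8 * n" if "h \<notin> \<sigma> ` P"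
      using insert.prems(2)[of h] that IH(4) by blast
    ultimately obtain \<sigma>' P' where P': "card P' \<le> card P + 1" "partial_embedding \<sigma>' P'" "light \<sigma>' P'"
      "insert h (\<sigma> ` P) \<subseteq> \<sigma>' ` P'"
      by (rule greedy_insert[OF IH(2,3) count'])
    have "card P' \<le> card P\<^sub>0 + card (insert h B)"
      using P'(1) IH(1) insert.hyps by simp
    moreover have "\<sigma>\<^sub>0 ` P\<^sub>0 \<union> insert h B \<subseteq> \<sigma>' ` P'"
      using IH(4) P'(4) by blast
    ultimately show ?case
      using P'(2,3) by blast
  qed
  then show ?thesis
    using that by blast
qed

lemma partial_embedding_star:
  assumes v: "v < n" and x: "x < n" and C: "C \<subseteq> nbrs n G v"
    and clique: "\<And>a b. a \<in> C \<Longrightarrow> b \<in> C \<Longrightarrow> a \<noteq> b \<Longrightarrow> G a b"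
    and f: "bij_betw f (nbrs n F x) C"
  shows "partial_embedding (f(x := v)) (insert x (nbrs n F x))"
proof -
  let ?\<sigma> = "f(x := v)" and ?N = "nbrs n F x"
  have Fi: "\<not> F a a" and Gs: "G a b \<Longrightarrow> G b a" and Gi: "\<not> G a a" for a b
    using F G unfolding sgraph_def by blast+
  have "x \<notin> ?N" "v \<notin> C"
    using Fi Gi C unfolding nbrs_def by auto
  have \<sigma>N: "?\<sigma> z = f z" "f z \<in> C" "G v (f z)" if "z \<in> ?N" for z
    using that f C \<open>x \<notin> ?N\<close> unfolding bij_betw_def nbrs_def by auto
  have "inj_on ?\<sigma> ?N"
    using f \<open>v \<notin> C\<close> by (simp add: bij_betw_def inj_on_fun_updI)
  moreover have "?\<sigma> ` ?N = C"
    using f \<sigma>N(1) by (simp add: bij_betw_def)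
  moreover have "?N - {x} = ?N"
    using \<open>x \<notin> ?N\<close> by blast
  ultimately have "inj_on ?\<sigma> (insert x ?N)"
    unfolding inj_on_insert using \<open>v \<notin> C\<close> by simp
  moreover have "G (?\<sigma> i) (?\<sigma> j)" if ij: "i \<in> insert x ?N" "j \<in> insert x ?N" "F i j" for i j
  proof -
    consider "i = x" "j \<in> ?N" | "j = x" "i \<in> ?N" | "i \<in> ?N" "j \<in> ?N" "i \<noteq> j"
      using ij Fi by blast
    then show ?thesis
    proof cases
      case 3
      then have "f i \<noteq> f j"
        using f unfolding bij_betw_def inj_on_def by blast
      with 3 show ?thesis
        using clique \<sigma>N by simp
    qed (use \<sigma>N Gs in simp_all)
  qed
  moreover have "insert x ?N \<subseteq> {..<n}" "?\<sigma> ` insert x ?N \<subseteq> {..<n}"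
    using x v C \<sigma>N(2) by (auto simp: nbrs_def)
  ultimately show ?thesis
    unfolding partial_embedding_def by blast
qed

end

locale spanning_packing = greedy_frame +
  fixes \<delta> x\<^sub>0 :: nat
  assumes D1: "1 \<le> D" and x\<^sub>0: "x\<^sub>0 < n" "degree n F x\<^sub>0 = \<delta>" and \<delta>: "1 \<le> \<delta>"
    and min_degree: "\<And>u. u < n \<Longrightarrow> \<delta> \<le> degree n G u"
    and missing: "\<And>v. v < n \<Longrightarrow> 5 * degree n G v \<le> n - 2 \<Longrightarrow>
      card (missing_pairs n G v) \<le> 2 * (degree n G v - \<delta>)"
    and large: "1600 * D * D \<le> n" "1000000 \<le> n"
begin

definition base :: "(nat \<Rightarrow> nat) \<Rightarrow> nat set \<Rightarrow> bool" where
  "base \<sigma> P \<longleftrightarrow> partial_embedding \<sigma> P \<and> light \<sigma> P \<and> card P \<le> D + 1 \<and>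
     (\<forall>h<n. h \<notin> \<sigma> ` P \<longrightarrow> 10 * non_degree n G h \<le> 8 * n)"

lemma base_of_high_degrees:
  assumes "\<And>v. v < n \<Longrightarrow> n - 2 < 5 * degree n G v"
  shows "base id {}"
  unfolding base_def
proof (intro conjI allI impI)
  fix h assume "h < n"
  then show "10 * non_degree n G h \<le> 8 * n"
    using non_degree_plus_degree[OF G, of h] assms[of h] by linarith
qed (auto simp: partial_embedding_def light_def load_def)

lemma low_degree_clique:
  assumes v: "v < n" and d: "5 * degree n G v \<le> n - 2"
  obtains C where "C \<subseteq> nbrs n G v" "card C = \<delta>" "\<And>a b. a \<in> C \<Longrightarrow> b \<in> C \<Longrightarrow> a \<noteq> b \<Longrightarrow> G a b"
proof (rule exists_clique_of_few_non_adjacent[OF finite_nbrs])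
  show "\<delta> \<le> card (nbrs n G v)"
    using min_degree[OF v] by (simp add: card_nbrs)
  show "\<not> G b a" if "\<not> G a b" for a b
    using that G unfolding sgraph_def by blast
  have "non_adjacent_pairs G (nbrs n G v) \<subseteq> missing_pairs n G v"
    using G unfolding non_adjacent_pairs_def nbrs_def missing_pairs_def sgraph_def by auto
  then show "card (non_adjacent_pairs G (nbrs n G v)) \<le> 2 * (card (nbrs n G v) - \<delta>)"
    using card_mono[OF finite_missing_pairs] missing[OF v d] unfolding card_nbrs by (meson le_trans)
qed (use that in blast)

text \<open>Around a vertex \<open>v\<close> of low degree we place \<open>x\<^sub>0\<close> on \<open>v\<close> and its neighbours on a clique
  in the neighbourhood of \<open>v\<close>.\<close>

lemma base_of_low_degree:
  assumes v: "v < n" and d: "5 * degree n G v \<le> n - 2"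
  shows "\<exists>\<sigma> P. base \<sigma> P"
proof -
  let ?M = "missing_pairs n G v"
  have M: "card ?M \<le> 2 * degree n G v"
    using missing[OF v d] by linarith
  obtain C where C: "C \<subseteq> nbrs n G v" "card C = \<delta>"
    and clique: "\<And>a b. a \<in> C \<Longrightarrow> b \<in> C \<Longrightarrow> a \<noteq> b \<Longrightarrow> G a b"
    using low_degree_clique[OF v d] by blast
  have "finite C"
    using C(1) finite_nbrs by (rule finite_subset)
  then obtain f where f: "bij_betw f (nbrs n F x\<^sub>0) C"
    using finite_same_card_bij[OF finite_nbrs] C(2) x\<^sub>0(2) by (metis card_nbrs)
  define \<sigma> where "\<sigma> = f(x\<^sub>0 := v)"
  define P where "P = insert x\<^sub>0 (nbrs n F x\<^sub>0)"
  have "10 * load \<sigma> P u \<le> 9 * n" if "u < n" "u \<notin> P" for u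
  proof -
    have "nbrs n F u \<inter> P \<subseteq> nbrs n F x\<^sub>0"
      using that F unfolding P_def nbrs_def sgraph_def by auto
    then have "load \<sigma> P u \<le> (\<Sum>z\<in>nbrs n F x\<^sub>0. non_degree n G (\<sigma> z))"
      unfolding load_def by (intro sum_mono2) auto
    also have "\<dots> = (\<Sum>z\<in>nbrs n F x\<^sub>0. non_degree n G (f z))"
      unfolding \<sigma>_def using F unfolding sgraph_def nbrs_def by (intro sum.cong) auto
    also have "\<dots> = (\<Sum>c\<in>C. non_degree n G c)"
      by (rule sum.reindex_bij_betw[OF f])
    also have "\<dots> \<le> card ?M"
      by (rule sum_non_degree_nbrs_le[OF G C(1)])
    finally show ?thesis
      using M d by linarith
  qed
  moreover have "card P \<le> D + 1"
    unfolding P_def using card_insert_le_m1[of "D + 1" "nbrs n F x\<^sub>0"] D[OF x\<^sub>0(1)]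
    by (simp add: card_nbrs)
  moreover have "10 * non_degree n G h \<le> 8 * n" if "h < n" "h \<notin> \<sigma> ` P" for h
  proof -
    have "h \<noteq> v"
      using that(2) unfolding \<sigma>_def P_def by auto
    then have "non_degree n G h \<le> card ?M + 1"
      by (rule non_degree_le_card_missing_pairs[OF that(1)])
    then show ?thesis
      using M d large(2) by linarith
  qed
  moreover have "partial_embedding \<sigma> P"
    unfolding \<sigma>_def P_def using partial_embedding_star[OF v x\<^sub>0(1) C(1) clique f] .
  ultimately show ?thesis
    unfolding base_def light_def by blast
qed

lemma exists_base: "\<exists>\<sigma> P. base \<sigma> P"
  using base_of_low_degree base_of_high_degrees by (meson not_le)

lemma placement_count_bound: "(D + 1 + 120 * D) * (D + 1) + 30 * D * D < n"
proof -
  have "(D + 1 + 120 * D) * (D + 1) \<le> (122 * D) * (2 * D)"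
    using D1 by (intro mult_le_mono) auto
  moreover have "0 < D * D"
    using D1 by simp
  ultimately show ?thesis
    using large(1) by linarith
qed

lemma placement_budget_bound: "4880 * D + 80 < 2 * n"
proof (cases "D \<le> 200")
  case True
  then show ?thesis
    using large(2) by linarith
next
  case False
  then have "201 * D \<le> D * D"
    by simp
  then show ?thesis
    using large(1) False by linarith
qed

text \<open>After the greedy phase every unplaced vertex has load below \<open>9n/10\<close> and only light
  images (non-degree at most \<open>n/(40 D)\<close>) remain, so every extension satisfies the
  swapping budget.\<close>

lemma budget_of_light:
  assumes emb: "partial_embedding \<sigma>\<^sub>1 P" and light: "light \<sigma>\<^sub>1 P"
    and heavy: "\<And>u. u < n \<Longrightarrow> u \<notin> \<sigma>\<^sub>1 ` P \<Longrightarrow> 40 * D * non_degree n G u \<le> n"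
    and card: "40 * (card P + D + 1) < 2 * n"
    and \<sigma>: "bij_betw \<sigma> {..<n} {..<n}" "\<forall>i\<in>P. \<sigma> i = \<sigma>\<^sub>1 i" and x: "x < n" "x \<notin> P"
  shows "(\<Sum>z\<in>nbrs n F x. non_degree n G (\<sigma> z)) + D * non_degree n G (\<sigma> x) + card P + D + 1 < n"
proof -
  have P: "P \<subseteq> {..<n}"
    using emb unfolding partial_embedding_def by blast
  have unplaced: "40 * D * non_degree n G (\<sigma> z) \<le> n" if "z < n" "z \<notin> P" for z
  proof (rule heavy)
    show "\<sigma> z < n"
      using \<sigma>(1) that(1) by (auto simp: bij_betw_def)
    show "\<sigma> z \<notin> \<sigma>\<^sub>1 ` P"
    proof
      assume "\<sigma> z \<in> \<sigma>\<^sub>1 ` P"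
      then obtain p where "p \<in> P" "\<sigma> z = \<sigma> p"
        using \<sigma>(2) by auto
      then show False
        using \<sigma>(1) that P unfolding bij_betw_def inj_on_def by blast
    qed
  qed
  let ?N = "nbrs n F x"
  have split: "(\<Sum>z\<in>?N. non_degree n G (\<sigma> z))
      = load \<sigma>\<^sub>1 P x + (\<Sum>z\<in>?N - P. non_degree n G (\<sigma> z))"
    unfolding load_def using \<sigma>(2) by (simp add: sum.Int_Diff[OF finite_nbrs, where B = P])
  have "10 * load \<sigma>\<^sub>1 P x \<le> 9 * n"
    using light x unfolding light_def by blast
  moreover have "40 * (\<Sum>z\<in>?N - P. non_degree n G (\<sigma> z)) \<le> n"
  proof -
    have "D * (40 * (\<Sum>z\<in>?N - P. non_degree n G (\<sigma> z))) = (\<Sum>z\<in>?N - P. 40 * D * non_degree n G (\<sigma> z))"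
      by (simp add: sum_distrib_left ac_simps)
    also have "\<dots> \<le> (\<Sum>z\<in>?N - P. n)"
      using unplaced by (intro sum_mono) (auto simp: nbrs_def)
    also have "\<dots> \<le> D * n"
      using card_mono[of ?N "?N - P"] D[OF x(1)] by (simp add: card_nbrs)
    finally show ?thesis
      using D1 by simp
  qed
  moreover have "40 * (D * non_degree n G (\<sigma> x)) \<le> n"
    using unplaced[OF x] by (simp add: ac_simps)
  moreover have "40 * (card P + D + 1) = 40 * card P + 40 * D + 40"
    by simp
  ultimately show ?thesis
    unfolding split using card by linarith
qed

lemma exists_spanning_embedding:
  obtains \<sigma> where "bij_betw \<sigma> {..<n} {..<n}" "\<And>i j. i < n \<Longrightarrow> j < n \<Longrightarrow> F i j \<Longrightarrow> G (\<sigma> i) (\<sigma> j)"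
proof -
  obtain \<sigma>\<^sub>0 P\<^sub>0 where "base \<sigma>\<^sub>0 P\<^sub>0"
    using exists_base by blast
  then have base: "partial_embedding \<sigma>\<^sub>0 P\<^sub>0" "light \<sigma>\<^sub>0 P\<^sub>0" "card P\<^sub>0 \<le> D + 1"
    "\<And>h. h < n \<Longrightarrow> h \<notin> \<sigma>\<^sub>0 ` P\<^sub>0 \<Longrightarrow> 10 * non_degree n G h \<le> 8 * n"
    unfolding base_def by auto
  define B where "B = {u. u < n \<and> n < 40 * D * non_degree n G u}"
  have "card {u. u < n \<and> n \<le> (40 * D) * non_degree n G u} \<le> (40 * D) * 3"
    using non_degree_sum n by (intro card_markov_le) auto
  moreover have "card B \<le> card {u. u < n \<and> n \<le> (40 * D) * non_degree n G u}"
    unfolding B_def by (intro card_mono) auto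
  ultimately have "card B \<le> 120 * D"
    by simp
  then have "(card P\<^sub>0 + card B) * (D + 1) \<le> (D + 1 + 120 * D) * (D + 1)"
    using base(3) by (intro mult_right_mono) auto
  then have count: "(card P\<^sub>0 + card B) * (D + 1) + 30 * D * D < n"
    using placement_count_bound by linarith
  have B: "finite B" "B \<subseteq> {..<n}"
    unfolding B_def by auto
  have margin: "10 * non_degree n G h \<le> 8 * n" if "h \<in> B" "h \<notin> \<sigma>\<^sub>0 ` P\<^sub>0" for h
    using base(4) that unfolding B_def by blast
  obtain \<sigma>\<^sub>1 P where P: "card P \<le> card P\<^sub>0 + card B" "partial_embedding \<sigma>\<^sub>1 P" "light \<sigma>\<^sub>1 P"
    "\<sigma>\<^sub>0 ` P\<^sub>0 \<union> B \<subseteq> \<sigma>\<^sub>1 ` P"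
    by (rule greedy_placement[OF B base(1,2) margin count])
  have "40 * (card P + D + 1) < 2 * n"
    using P(1) base(3) \<open>card B \<le> 120 * D\<close> placement_budget_bound
    by (simp only: distrib_left mult_1_right)
  moreover have "40 * D * non_degree n G u \<le> n" if "u < n" "u \<notin> \<sigma>\<^sub>1 ` P" for u
    using that P(4) unfolding B_def by force
  ultimately have budget: "(\<Sum>z\<in>nbrs n F x. non_degree n G (\<sigma> z)) + D * non_degree n G (\<sigma> x) + card P + D + 1 < n"
    if "bij_betw \<sigma> {..<n} {..<n}" "\<forall>i\<in>P. \<sigma> i = \<sigma>\<^sub>1 i" "x < n" "x \<notin> P" for \<sigma> x
    using budget_of_light[OF P(2,3)] that by blast
  have "P \<subseteq> {..<n}" "inj_on \<sigma>\<^sub>1 P" "\<sigma>\<^sub>1 ` P \<subseteq> {..<n}"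
    and "\<And>i j. i \<in> P \<Longrightarrow> j \<in> P \<Longrightarrow> F i j \<Longrightarrow> G (\<sigma>\<^sub>1 i) (\<sigma>\<^sub>1 j)"
    using P(2) unfolding partial_embedding_def by auto
  from exists_embedding_by_swaps[OF F G D this budget] that show ?thesis
    by blast
qed

end

section \<open>The spectral bound\<close>

lemma min_degree_attained:
  assumes "n > 0"
  obtains x where "x < n" "degree n F x = min_degree n F"
proof -
  have "min_degree n F \<in> degree n F ` {..<n}"
    unfolding min_degree_def using assms by (intro Min_in) auto
  then show ?thesis
    using that by auto
qed

lemma degree_le_max_degree: "i < n \<Longrightarrow> degree n F i \<le> max_degree n F"
  unfolding max_degree_def by (intro Max_ge) auto

lemma square_le_of_le_sqrt:
  assumes "real D \<le> sqrt (real n) / 40"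
  shows "1600 * D * D \<le> n"
proof -
  have "(40 * real D)\<^sup>2 \<le> (sqrt (real n))\<^sup>2"
    using assms by (intro power_mono) auto
  then have "real (1600 * D * D) \<le> real n"
    by (simp add: power2_eq_square)
  then show ?thesis
    by (simp only: of_nat_le_iff)
qed

lemma min_degree_bounds:
  assumes "\<forall>i<n. degree n F i \<ge> 1" "1600 * max_degree n F * max_degree n F \<le> n" "n > 0"
  shows "1 \<le> min_degree n F" "min_degree n F \<le> max_degree n F" "min_degree n F < n"
proof -
  obtain x where x: "x < n" "degree n F x = min_degree n F"
    using min_degree_attained[OF assms(3)] .
  then show "1 \<le> min_degree n F" "min_degree n F \<le> max_degree n F"
    using assms(1) degree_le_max_degree[OF x(1), of F] by auto
  moreover have "max_degree n F \<le> max_degree n F * max_degree n F"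
    using calculation by simp
  ultimately show "min_degree n F < n"
    using assms(2) by linarith
qed

lemma spec_rad_lt_H_graph_of_min_degree:
  assumes F: "sgraph n F" "\<forall>i<n. degree n F i \<ge> 1" "1600 * max_degree n F * max_degree n F \<le> n"
    and G: "sgraph n G" and free: "\<not> contains_subgraph n G n F"
    and deg: "\<And>u. u < n \<Longrightarrow> min_degree n F \<le> degree n G u" and n_large: "1000000 \<le> n"
  shows "spec_rad n G < spec_rad n (H_graph n (min_degree n F))"
proof (rule ccontr)
  let ?\<delta> = "min_degree n F" and ?D = "max_degree n F" and ?\<rho> = "spec_rad n G"
  assume "\<not> ?\<rho> < spec_rad n (H_graph n ?\<delta>)"
  then have \<rho>: "spec_rad n (H_graph n ?\<delta>) \<le> ?\<rho>"
    by simp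
  have "n > 0"
    using n_large by simp
  then obtain x\<^sub>0 where x\<^sub>0: "x\<^sub>0 < n" "degree n F x\<^sub>0 = ?\<delta>"
    by (rule min_degree_attained)
  have \<delta>: "1 \<le> ?\<delta>" "?\<delta> \<le> ?D" "?\<delta> < n"
    using min_degree_bounds[OF F(2,3) \<open>n > 0\<close>] by auto
  then have large: "real n - 2 \<le> ?\<rho>"
    using spec_rad_H_graph_ge[OF \<delta>(1,3)] \<rho> n_large by simp
  obtain y where y: "\<And>i. 0 \<le> y i" "\<exists>i<n. y i \<noteq> 0" "\<And>i. i < n \<Longrightarrow> \<bar>?\<rho>\<bar> * y i \<le> nbr_sum n G y i"
    using spec_rad_sub_eigenvector[OF G] n_large by auto
  interpret large_subeigenvector n G ?\<rho> y
    using G n_large large y by unfold_locales auto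
  interpret spanning_packing n F G ?D ?\<delta> x\<^sub>0
  proof unfold_locales
    show "(\<Sum>u<n. non_degree n G u) \<le> 3 * n"
      by (rule sum_non_degree_le)
    show "card (missing_pairs n G v) \<le> 2 * (degree n G v - ?\<delta>)" if "v < n" "5 * degree n G v \<le> n - 2" for v
      using card_missing_pairs_le[OF \<delta>(1,3) \<rho> that(1) deg[OF that(1)] that(2)] .
  qed (use F \<open>sgraph n G\<close> x\<^sub>0 \<delta> deg n_large degree_le_max_degree in auto)
  obtain \<sigma> where "bij_betw \<sigma> {..<n} {..<n}" "\<And>i j. i < n \<Longrightarrow> j < n \<Longrightarrow> F i j \<Longrightarrow> G (\<sigma> i) (\<sigma> j)"
    by (rule exists_spanning_embedding) blast
  then have "contains_subgraph n G n F"
    unfolding contains_subgraph_def bij_betw_def by blast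
  then show False
    using free by simp
qed

theorem theorem1p4:
  shows "\<exists>n0::nat. \<forall>n\<ge>n0. \<forall>F G.
     sgraph n F \<longrightarrow> (\<forall>i<n. degree n F i \<ge> 1) \<longrightarrow>
     real (max_degree n F) \<le> sqrt (real n) / 40 \<longrightarrow>
     sgraph n G \<longrightarrow> \<not> contains_subgraph n G n F \<longrightarrow>
     spec_rad n G \<le> spec_rad n (H_graph n (min_degree n F)) \<and>
     (spec_rad n G = spec_rad n (H_graph n (min_degree n F))
        \<longleftrightarrow> graph_iso n G (H_graph n (min_degree n F)))"
proof (intro exI[of _ 1000000] allI impI)
  fix n :: nat and F G
  assume n: "n \<ge> 1000000" and F: "sgraph n F" "\<forall>i<n. degree n F i \<ge> 1"
    and D: "real (max_degree n F) \<le> sqrt (real n) / 40" and G: "sgraph n G"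
    and free: "\<not> contains_subgraph n G n F"
  let ?\<delta> = "min_degree n F" and ?H = "H_graph n (min_degree n F)"
  have D: "1600 * max_degree n F * max_degree n F \<le> n"
    using square_le_of_le_sqrt[OF D] .
  show "spec_rad n G \<le> spec_rad n ?H \<and> (spec_rad n G = spec_rad n ?H \<longleftrightarrow> graph_iso n G ?H)"
  proof (cases "\<exists>v<n. degree n G v < ?\<delta>")
    case True
    then obtain v where v: "v < n" "degree n G v < ?\<delta>"
      by blast
    have "1 \<le> ?\<delta>" "?\<delta> < n" "3 \<le> n"
      using min_degree_bounds[OF F(2) D] n by auto
    note low = spec_rad_le_H_graph_of_low_degree[OF G this v]
    show ?thesis
      using low spec_rad_graph_iso[of n G ?H] by blast
  next
    case False
    then have "?\<delta> \<le> degree n G u" if "u < n" for u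
      using False that not_less by blast
    then have "spec_rad n G < spec_rad n ?H"
      using spec_rad_lt_H_graph_of_min_degree[OF F D G free _ n] by blast
    then show ?thesis
      using spec_rad_graph_iso by force
  qed
qed

end
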